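(* Let $P$ be a program and $SQ$ a stack-queue scheduling rule. Let $A,B,C,D$ be p-goals and $\underline{\pi}$ a shifting such that both $A|B|C|D$ and $A|B|C|B\underline{\pi}|D$ are defined (concatenations). If there is a p-SLD derivation $A|B|C|D\xrightarrow{SQ,X.P}Q$, then there exist a template $Y$ and a p-SLD derivation $A|B|C|B\underline{\pi}|D\xrightarrow{SQ,Y.P}R$ with $X\subseteq_L Y$ and $\#Q\le\#R$.
   Context: A p-atom is a pair $a[p]$ of an atom $a$ and a rational priority $p$. A p-goal is a finite set of p-atoms with pairwise distinct priorities, regarded as a list ordered by increasing priority; $\#G$ is its number of p-atoms. Substitutions act on atoms and leave priorities unchanged. A clause is $h\leftarrow B$ with $h$ an atom and $B$ a p-goal; a program is a finite set of clauses. For p-goals with no common priority, $F+G=F\cup G$; $F|G$ denotes $F+G$ when all priorities of $F$ are smaller than those of $G$. A shifting $\underline{\pi}$ is a strictly increasing bijection $\mathbb{Q}\to\mathbb{Q}$; $G\underline\pi$ replaces each priority $p$ by $\underline\pi(p)$. Priority derivation step: for a p-goal $a|F$ ($a$ of least priority), clause $c=(h\leftarrow B)$, renaming $\xi$ with $var(a|F)\cap var(c\xi)=\emptyset$, idempotent relevant mgu $\theta$ of $a$ and $h\xi$, shifting $\underline{\pi}$ with $F$, $B\xi\underline{\pi}$ sharing no priority: $a|F\xrightarrow{c\xi,\theta}(F+B\xi\underline{\pi})\theta$. A p-SLD derivation is a sequence of such steps with each renamed clause $c_j\xi_j$ variable-disjoint from the initial goal and all earlier renamed clauses; its template is the sequence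 of applied clauses. For templates, $X\subseteq_L Y$ means $X$ is a subsequence of $Y$. $G\xrightarrow{S,M.P}R$ denotes a p-SLD derivation with template $M$, all clauses in $P$, all steps in $S$. Lowering: for $c=(h\leftarrow B)$, a step $a\lambda\underline{\sigma}|(K\lambda\underline{\sigma}+X)\xrightarrow{c}(X+K\lambda\underline{\sigma}+B\xi''\underline{\theta}'')\alpha''$ is a lowering by $X$ of $a|K\xrightarrow{c}(K+B\xi'\underline{\theta}')\alpha'$; a congruent lowering if some shifting $\underline{\rho}$ has $K\underline{\rho}=K\underline{\sigma}$ and $B\underline{\theta}'\underline{\rho}=B\underline{\theta}''$. Steps are congruent lowerings of each other if each is a congruent lowering of the other. A set $S$ of steps is complete if (i) whenever some step $G\xrightarrow{c}\cdot$ exists, some step $G\xrightarrow{c}\cdot$ lies in $S$, and (ii) $S$ contains every step that is a congruent lowering of each other with a step of $S$. Stack-queue scheduling rule: a complete set $SQ$ of priority derivation steps such that for every clause $c=(h\leftarrow B)$ there are p-goals $M_s,M_q$ with $B=M_s|M_q$ such that every step $a|K\xrightarrow{c\xi,\mu}R$ in $SQ$ satisfies $R=(M_s\xi\underline{\gamma}|K|M_q\xi\underline{\gamma})\mu$ for some shifting $\underline{\gamma}$. *)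

theory Defs
  imports Complex_Main "HOL-Library.Sublist"
begin

datatype ('f,'v) trm = Var 'v | Fn 'f "('f,'v) trm list"

datatype ('f,'v) atom = Atom 'f "('f,'v) trm list"

type_synonym ('f,'v) subst = "'v \<Rightarrow> ('f,'v) trm"

fun subst_trm :: "('f,'v) subst \<Rightarrow> ('f,'v) trm \<Rightarrow> ('f,'v) trm" where
  "subst_trm \<sigma> (Var x) = \<sigma> x"
| "subst_trm \<sigma> (Fn f ts) = Fn f (map (subst_trm \<sigma>) ts)"

fun subst_atom :: "('f,'v) subst \<Rightarrow> ('f,'v) atom \<Rightarrow> ('f,'v) atom" where
  "subst_atom \<sigma> (Atom f ts) = Atom f (map (subst_trm \<sigma>) ts)"

fun vars_trm :: "('f,'v) trm \<Rightarrow> 'v set" where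
  "vars_trm (Var x) = {x}"
| "vars_trm (Fn f ts) = (\<Union>t\<in>set ts. vars_trm t)"

fun vars_atom :: "('f,'v) atom \<Rightarrow> 'v set" where
  "vars_atom (Atom f ts) = (\<Union>t\<in>set ts. vars_trm t)"

definition subst_comp :: "('f,'v) subst \<Rightarrow> ('f,'v) subst \<Rightarrow> ('f,'v) subst" where
  "subst_comp \<sigma> \<tau> = (\<lambda>x. subst_trm \<tau> (\<sigma> x))"

definition subst_dom :: "('f,'v) subst \<Rightarrow> 'v set" where
  "subst_dom \<sigma> = {x. \<sigma> x \<noteq> Var x}"

definition subst_vars :: "('f,'v) subst \<Rightarrow> 'v set" where
  "subst_vars \<sigma> = subst_dom \<sigma> \<union> (\<Union>x\<in>subst_dom \<sigma>. vars_trm (\<sigma> x))"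

definition renaming :: "('f,'v) subst \<Rightarrow> bool" where
  "renaming \<xi> \<longleftrightarrow> (\<exists>f. bij f \<and> \<xi> = (\<lambda>x. Var (f x)))"

definition is_mgu :: "('f,'v) subst \<Rightarrow> ('f,'v) atom \<Rightarrow> ('f,'v) atom \<Rightarrow> bool" where
  "is_mgu \<theta> a b \<longleftrightarrow> subst_atom \<theta> a = subst_atom \<theta> b \<and>
     (\<forall>\<tau>. subst_atom \<tau> a = subst_atom \<tau> b \<longrightarrow> (\<exists>\<delta>. \<tau> = subst_comp \<theta> \<delta>))"

definition idem_relevant_mgu :: "('f,'v) subst \<Rightarrow> ('f,'v) atom \<Rightarrow> ('f,'v) atom \<Rightarrow> bool" where
  "idem_relevant_mgu \<theta> a b \<longleftrightarrow> is_mgu \<theta> a b \<and> subst_comp \<theta> \<theta> = \<theta> \<and>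
     subst_vars \<theta> \<subseteq> vars_atom a \<union> vars_atom b"

type_synonym ('f,'v) pgoal = "(('f,'v) atom \<times> rat) set"
type_synonym ('f,'v) clause = "('f,'v) atom \<times> ('f,'v) pgoal"

definition prios :: "('f,'v) pgoal \<Rightarrow> rat set" where
  "prios G = snd ` G"

definition pgoal :: "('f,'v) pgoal \<Rightarrow> bool" where
  "pgoal G \<longleftrightarrow> finite G \<and> inj_on snd G"

definition pgoal_vars :: "('f,'v) pgoal \<Rightarrow> 'v set" where
  "pgoal_vars G = (\<Union>x\<in>G. vars_atom (fst x))"

definition psubst :: "('f,'v) subst \<Rightarrow> ('f,'v) pgoal \<Rightarrow> ('f,'v) pgoal" where
  "psubst \<sigma> G = (\<lambda>(a,p). (subst_atom \<sigma> a, p)) ` G"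

definition shifting :: "(rat \<Rightarrow> rat) \<Rightarrow> bool" where
  "shifting \<pi> \<longleftrightarrow> strict_mono \<pi> \<and> bij \<pi>"

definition shift :: "(rat \<Rightarrow> rat) \<Rightarrow> ('f,'v) pgoal \<Rightarrow> ('f,'v) pgoal" where
  "shift \<pi> G = (\<lambda>(a,p). (a, \<pi> p)) ` G"

text \<open>The concatenation \<open>G1|G2|...|Gn\<close> is defined: all are p-goals and every priority
  of an earlier component is smaller than every priority of a later one.\<close>
definition prio_less :: "('f,'v) pgoal \<Rightarrow> ('f,'v) pgoal \<Rightarrow> bool" where
  "prio_less F G \<longleftrightarrow> (\<forall>p\<in>prios F. \<forall>q\<in>prios G. p < q)"

definition pcat_ok :: "('f,'v) pgoal list \<Rightarrow> bool" where
  "pcat_ok Gs \<longleftrightarrow> (\<forall>G\<in>set Gs. pgoal G) \<and> sorted_wrt prio_less Gs"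

definition is_clause :: "('f,'v) clause \<Rightarrow> bool" where
  "is_clause c \<longleftrightarrow> pgoal (snd c)"

definition program :: "('f,'v) clause set \<Rightarrow> bool" where
  "program P \<longleftrightarrow> finite P \<and> (\<forall>c\<in>P. is_clause c)"

definition rename_clause :: "('f,'v) subst \<Rightarrow> ('f,'v) clause \<Rightarrow> ('f,'v) clause" where
  "rename_clause \<xi> c = (subst_atom \<xi> (fst c), psubst \<xi> (snd c))"

definition clause_vars :: "('f,'v) clause \<Rightarrow> 'v set" where
  "clause_vars c = vars_atom (fst c) \<union> pgoal_vars (snd c)"

text \<open>A step \<open>G --c\<xi>,\<theta>--> R\<close> is recorded as the tuple \<open>(G, c, \<xi>, \<theta>, R)\<close>.\<close>
type_synonym ('f,'v) step =
  "('f,'v) pgoal \<times> ('f,'v) clause \<times> ('f,'v) subst \<times> ('f,'v) subst \<times> ('f,'v) pgoal"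

definition is_step :: "('f,'v) step \<Rightarrow> bool" where
  "is_step s \<longleftrightarrow> (case s of (G, (h, B), \<xi>, \<theta>, R) \<Rightarrow>
     pgoal G \<and> is_clause (h, B) \<and> renaming \<xi> \<and>
     (\<exists>a p F. G = insert (a, p) F \<and> (a, p) \<notin> F \<and> (\<forall>q\<in>prios F. p < q) \<and>
        pgoal_vars G \<inter> clause_vars (rename_clause \<xi> (h, B)) = {} \<and>
        idem_relevant_mgu \<theta> a (subst_atom \<xi> h) \<and>
        (\<exists>\<pi>. shifting \<pi> \<and> prios F \<inter> prios (shift \<pi> (psubst \<xi> B)) = {} \<and>
             R = psubst \<theta> (F \<union> shift \<pi> (psubst \<xi> B)))))"

definition step_goal :: "('f,'v) step \<Rightarrow> ('f,'v) pgoal" where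
  "step_goal s = fst s"
definition step_clause :: "('f,'v) step \<Rightarrow> ('f,'v) clause" where
  "step_clause s = fst (snd s)"
definition step_ren :: "('f,'v) step \<Rightarrow> ('f,'v) subst" where
  "step_ren s = fst (snd (snd s))"
definition step_res :: "('f,'v) step \<Rightarrow> ('f,'v) pgoal" where
  "step_res s = snd (snd (snd (snd s)))"

text \<open>\<open>cong_lowering s2 s1\<close>: step s2 is a congruent lowering (by some X) of step s1.\<close>
definition cong_lowering :: "('f,'v) step \<Rightarrow> ('f,'v) step \<Rightarrow> bool" where
  "cong_lowering s2 s1 \<longleftrightarrow>
    (\<exists>G1 h B \<xi>1 \<alpha>1 R1 G2 \<xi>2 \<alpha>2 R2 a p K X lam \<sigma> \<theta>1 \<theta>2 \<rho>.
       s1 = (G1, (h, B), \<xi>1, \<alpha>1, R1) \<and> s2 = (G2, (h, B), \<xi>2, \<alpha>2, R2) \<and>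
       is_step s1 \<and> is_step s2 \<and>
       G1 = insert (a, p) K \<and> (a, p) \<notin> K \<and> (\<forall>q\<in>prios K. p < q) \<and>
       shifting \<theta>1 \<and> R1 = psubst \<alpha>1 (K \<union> shift \<theta>1 (psubst \<xi>1 B)) \<and>
       shifting \<sigma> \<and>
       prios (shift \<sigma> (psubst lam K)) \<inter> prios X = {} \<and>
       (\<forall>q\<in>prios (shift \<sigma> (psubst lam K) \<union> X). \<sigma> p < q) \<and>
       G2 = insert (subst_atom lam a, \<sigma> p) (shift \<sigma> (psubst lam K) \<union> X) \<and>
       shifting \<theta>2 \<and>
       R2 = psubst \<alpha>2 (X \<union> shift \<sigma> (psubst lam K) \<union> shift \<theta>2 (psubst \<xi>2 B)) \<and>
       shifting \<rho> \<and> shift \<rho> K = shift \<sigma> K \<and> shift \<rho> (shift \<theta>1 B) = shift \<theta>2 B)"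

definition complete_steps :: "('f,'v) step set \<Rightarrow> bool" where
  "complete_steps S \<longleftrightarrow> (\<forall>s\<in>S. is_step s) \<and>
     (\<forall>G c. (\<exists>\<xi> \<theta> R. is_step (G, c, \<xi>, \<theta>, R)) \<longrightarrow> (\<exists>\<xi> \<theta> R. (G, c, \<xi>, \<theta>, R) \<in> S)) \<and>
     (\<forall>s\<in>S. \<forall>s'. cong_lowering s' s \<and> cong_lowering s s' \<longrightarrow> s' \<in> S)"

definition stack_queue :: "('f,'v) step set \<Rightarrow> bool" where
  "stack_queue SQ \<longleftrightarrow> complete_steps SQ \<and>
     (\<forall>h B. is_clause (h, B) \<longrightarrow>
        (\<exists>Ms Mq. pcat_ok [Ms, Mq] \<and> B = Ms \<union> Mq \<and>
           (\<forall>G \<xi> \<mu> R. (G, (h, B), \<xi>, \<mu>, R) \<in> SQ \<longrightarrow>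
              (\<exists>a p K \<gamma>. G = insert (a, p) K \<and> (a, p) \<notin> K \<and> (\<forall>q\<in>prios K. p < q) \<and>
                 shifting \<gamma> \<and>
                 pcat_ok [shift \<gamma> (psubst \<xi> Ms), K, shift \<gamma> (psubst \<xi> Mq)] \<and>
                 R = psubst \<mu> (shift \<gamma> (psubst \<xi> Ms) \<union> K \<union> shift \<gamma> (psubst \<xi> Mq))))))"

text \<open>\<open>pderiv_aux S P used G ss R\<close>: the list of steps ss is a derivation from G to R,
  all steps in S, all clauses in P, each renamed clause variable-disjoint from the
  variables in \<open>used\<close> (initial goal and earlier renamed clauses).\<close>
fun pderiv_aux :: "('f,'v) step set \<Rightarrow> ('f,'v) clause set \<Rightarrow> 'v set \<Rightarrow>
    ('f,'v) pgoal \<Rightarrow> ('f,'v) step list \<Rightarrow> ('f,'v) pgoal \<Rightarrow> bool" where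
  "pderiv_aux S P used G [] R \<longleftrightarrow> R = G"
| "pderiv_aux S P used G (s # ss) R \<longleftrightarrow>
     s \<in> S \<and> is_step s \<and> step_goal s = G \<and> step_clause s \<in> P \<and>
     clause_vars (rename_clause (step_ren s) (step_clause s)) \<inter> used = {} \<and>
     pderiv_aux S P (used \<union> clause_vars (rename_clause (step_ren s) (step_clause s)))
       (step_res s) ss R"

text \<open>\<open>pderiv S P G ss R\<close>: \<open>G --(S, M.P)--> R\<close> with template \<open>M = template ss\<close>.\<close>
definition pderiv :: "('f,'v) step set \<Rightarrow> ('f,'v) clause set \<Rightarrow>
    ('f,'v) pgoal \<Rightarrow> ('f,'v) step list \<Rightarrow> ('f,'v) pgoal \<Rightarrow> bool" where
  "pderiv S P G ss R \<longleftrightarrow> pderiv_aux S P (pgoal_vars G) G ss R"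

definition template :: "('f,'v) step list \<Rightarrow> ('f,'v) clause list" where
  "template ss = map step_clause ss"

end

(*
  The given derivation from A|B|C|D is simulated by a derivation from the larger
  goal, which at every stage consists of a copy of the current small goal (its priorities
  moved by a strictly monotone map f) and of extra atoms descending from the duplicate of B.
  Each extra atom is an instance of the atom denoted by a proof tree recording how its
  original in B has been resolved so far, and every leaf of that tree reached through stack
  parts of clause bodies is scheduled before it. A step of the small derivation is mirrored
  on the copy with the same clause. When an extra atom comes first, the invariant forces its
  tree to have been resolved at the root, and that resolution is replayed on it with a fresh
  variant of the clause and an mgu fixing the variables of the small derivation; replays
  decrease the number of inner tree nodes, so only finitely many are interleaved. The copy of
  the final goal Q inside R gives #Q <= #R, and the mirrored steps give the subsequence of
  templates.
*)

theory Submission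
  imports Defs
begin

lemma subst_trm_comp [simp]: "subst_trm (subst_comp \<sigma> \<tau>) t = subst_trm \<tau> (subst_trm \<sigma> t)"
  by (induction t) (auto simp: subst_comp_def)

lemma subst_atom_comp [simp]: "subst_atom (subst_comp \<sigma> \<tau>) a = subst_atom \<tau> (subst_atom \<sigma> a)"
  by (cases a) auto

lemma subst_trm_Var [simp]: "subst_trm Var t = t"
  by (induction t) (auto simp: map_idI)

lemma subst_atom_Var [simp]: "subst_atom Var a = a"
  by (cases a) (auto intro: map_idI)

lemma subst_comp_assoc: "subst_comp (subst_comp \<sigma> \<tau>) \<rho> = subst_comp \<sigma> (subst_comp \<tau> \<rho>)"
  by (rule ext) (simp add: subst_comp_def subst_trm_comp[unfolded subst_comp_def])

lemma subst_trm_cong: "(\<And>x. x \<in> vars_trm t \<Longrightarrow> \<sigma> x = \<tau> x) \<Longrightarrow> subst_trm \<sigma> t = subst_trm \<tau> t"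
  by (induction t) auto

lemma subst_atom_cong: "(\<And>x. x \<in> vars_atom a \<Longrightarrow> \<sigma> x = \<tau> x) \<Longrightarrow> subst_atom \<sigma> a = subst_atom \<tau> a"
  by (cases a) (auto intro: subst_trm_cong)

lemma subst_trm_id_on: "(\<And>x. x \<in> vars_trm t \<Longrightarrow> \<sigma> x = Var x) \<Longrightarrow> subst_trm \<sigma> t = t"
  using subst_trm_cong[of t \<sigma> Var] by simp

lemma subst_atom_id_on: "(\<And>x. x \<in> vars_atom a \<Longrightarrow> \<sigma> x = Var x) \<Longrightarrow> subst_atom \<sigma> a = a"
  using subst_atom_cong[of a \<sigma> Var] by simp

lemma finite_vars_trm [simp]: "finite (vars_trm t)"
  by (induction t) auto

lemma finite_vars_atom [simp]: "finite (vars_atom a)"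
  by (cases a) auto

lemma subst_comp_Var_left [simp]: "subst_comp Var \<tau> = \<tau>"
  by (auto simp: subst_comp_def)

lemma vars_subst_trm: "vars_trm (subst_trm \<sigma> t) = (\<Union>x\<in>vars_trm t. vars_trm (\<sigma> x))"
  by (induction t) auto

lemma vars_subst_atom: "vars_atom (subst_atom \<sigma> a) = (\<Union>x\<in>vars_atom a. vars_trm (\<sigma> x))"
  by (cases a) (auto simp: vars_subst_trm)

lemma vars_subst_var: "x \<in> vars_trm (\<sigma> y) \<Longrightarrow> x \<in> {y} \<union> subst_vars \<sigma>"
  by (cases "\<sigma> y = Var y") (auto simp: subst_vars_def subst_dom_def)

lemma subst_vars_comp: "subst_vars (subst_comp \<sigma> \<tau>) \<subseteq> subst_vars \<sigma> \<union> subst_vars \<tau>"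
proof
  fix z assume z: "z \<in> subst_vars (subst_comp \<sigma> \<tau>)"
  show "z \<in> subst_vars \<sigma> \<union> subst_vars \<tau>"
  proof (cases "z \<in> subst_dom (subst_comp \<sigma> \<tau>)")
    case True
    then show ?thesis
      by (cases "\<sigma> z = Var z") (auto simp: subst_vars_def subst_dom_def subst_comp_def)
  next
    case False
    with z obtain x y where x: "x \<in> subst_dom (subst_comp \<sigma> \<tau>)"
      and y: "y \<in> vars_trm (\<sigma> x)" "z \<in> vars_trm (\<tau> y)"
      by (auto simp: subst_vars_def subst_comp_def vars_subst_trm)
    show ?thesis
    proof (cases "\<sigma> x = Var x")
      case True
      with x y show ?thesis by (auto simp: subst_vars_def subst_dom_def subst_comp_def)
    next
      case False
      with y(1) have "y \<in> subst_vars \<sigma>" by (auto simp: subst_vars_def subst_dom_def)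
      with vars_subst_var[of z \<tau> y] y(2) show ?thesis by auto
    qed
  qed
qed

lemma subst_vars_upd: "subst_vars (Var(x := t)) \<subseteq> {x} \<union> vars_trm t"
  by (auto simp: subst_vars_def subst_dom_def split: if_splits)

lemma subst_atom_commute_fixing:
  assumes "subst_vars \<theta> \<subseteq> Vs" "\<forall>x\<in>Vs. \<zeta> x = Var x"
  shows "subst_atom (\<lambda>x. if x \<in> Vs then Var x else subst_trm \<theta> (\<zeta> x)) (subst_atom \<theta> a) =
         subst_atom \<theta> (subst_atom \<zeta> a)"
proof -
  let ?\<zeta>' = "\<lambda>x. if x \<in> Vs then Var x else subst_trm \<theta> (\<zeta> x)"
  have "subst_trm ?\<zeta>' (\<theta> y) = subst_trm \<theta> (\<zeta> y)" for y
  proof (cases "y \<in> Vs")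
    case True
    then have "vars_trm (\<theta> y) \<subseteq> Vs" using assms(1) vars_subst_var[of _ \<theta> y] by blast
    then have "subst_trm ?\<zeta>' (\<theta> y) = \<theta> y" by (intro subst_trm_id_on) auto
    then show ?thesis using True assms(2) by simp
  next
    case False
    then have "\<theta> y = Var y" using assms(1) by (auto simp: subst_vars_def subst_dom_def)
    with False show ?thesis by simp
  qed
  then have "subst_comp \<theta> ?\<zeta>' = subst_comp \<zeta> \<theta>"
    by (auto simp: subst_comp_def)
  then show ?thesis by (metis subst_atom_comp)
qed

section \<open>Unification\<close>

type_synonym ('f,'v) eqs = "(('f,'v) trm \<times> ('f,'v) trm) list"

definition unifiers :: "('f,'v) eqs \<Rightarrow> ('f,'v) subst set" where
  "unifiers E = {\<sigma>. \<forall>(s,t)\<in>set E. subst_trm \<sigma> s = subst_trm \<sigma> t}"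

definition eqs_vars :: "('f,'v) eqs \<Rightarrow> 'v set" where
  "eqs_vars E = (\<Union>(s,t)\<in>set E. vars_trm s \<union> vars_trm t)"

fun trm_size :: "('f,'v) trm \<Rightarrow> nat" where
  "trm_size (Var x) = 1"
| "trm_size (Fn f ts) = Suc (sum_list (map trm_size ts))"

lemma trm_size_pos [simp]: "0 < trm_size t"
  by (cases t) auto

definition eqs_size :: "('f,'v) eqs \<Rightarrow> nat" where
  "eqs_size E = sum_list (map (\<lambda>(s,t). trm_size s + trm_size t) E)"

text \<open>As \<open>\<mu>\<close> is itself a unifier, \<open>\<tau> = \<mu>\<tau>\<close> for all unifiers \<open>\<tau>\<close> makes \<open>\<mu>\<close> an idempotent most
  general unifier.\<close>
definition idem_relevant_mgu_eqs :: "('f,'v) subst \<Rightarrow> ('f,'v) eqs \<Rightarrow> bool" where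
  "idem_relevant_mgu_eqs \<mu> E \<longleftrightarrow> \<mu> \<in> unifiers E \<and> (\<forall>\<tau>\<in>unifiers E. subst_comp \<mu> \<tau> = \<tau>) \<and>
     subst_vars \<mu> \<subseteq> eqs_vars E"

lemma finite_eqs_vars [simp]: "finite (eqs_vars E)"
  by (induction E) (auto simp: eqs_vars_def)

lemma unifiers_Cons: "unifiers ((s,t) # E) = {\<sigma>. subst_trm \<sigma> s = subst_trm \<sigma> t} \<inter> unifiers E"
  by (auto simp: unifiers_def)

lemma unifiers_append: "unifiers (E @ E') = unifiers E \<inter> unifiers E'"
  by (auto simp: unifiers_def)

lemma eqs_vars_Cons: "eqs_vars ((s,t) # E) = vars_trm s \<union> vars_trm t \<union> eqs_vars E"
  by (auto simp: eqs_vars_def)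

lemma unifiers_zip:
  "length ss = length ts \<Longrightarrow>
   \<sigma> \<in> unifiers (zip ss ts) \<longleftrightarrow> map (subst_trm \<sigma>) ss = map (subst_trm \<sigma>) ts"
  by (induction ss ts rule: list_induct2) (auto simp: unifiers_def)

lemma eqs_vars_zip:
  "length ss = length ts \<Longrightarrow>
   eqs_vars (zip ss ts) = (\<Union>s\<in>set ss. vars_trm s) \<union> (\<Union>t\<in>set ts. vars_trm t)"
  by (induction ss ts rule: list_induct2) (auto simp: eqs_vars_def)

lemma eqs_size_zip:
  "length ss = length ts \<Longrightarrow>
   eqs_size (zip ss ts) = sum_list (map trm_size ss) + sum_list (map trm_size ts)"
  by (induction ss ts rule: list_induct2) (auto simp: eqs_size_def)

definition subst_eqs :: "('f,'v) subst \<Rightarrow> ('f,'v) eqs \<Rightarrow> ('f,'v) eqs" where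
  "subst_eqs \<sigma> E = map (\<lambda>(s,t). (subst_trm \<sigma> s, subst_trm \<sigma> t)) E"

lemma unifiers_subst_eqs: "\<tau> \<in> unifiers (subst_eqs \<sigma> E) \<longleftrightarrow> subst_comp \<sigma> \<tau> \<in> unifiers E"
  by (auto simp: unifiers_def subst_eqs_def)

lemma eqs_vars_subst_eqs_elim:
  "x \<notin> vars_trm r \<Longrightarrow> eqs_vars (subst_eqs (Var(x := r)) E) \<subseteq> eqs_vars E \<union> vars_trm r - {x}"
  by (auto simp: subst_eqs_def eqs_vars_def vars_subst_trm split: if_splits)

lemma idem_relevant_mgu_eqs_Nil: "idem_relevant_mgu_eqs Var []"
  by (auto simp: idem_relevant_mgu_eqs_def unifiers_def subst_vars_def subst_dom_def)

lemma occurs_check: "subst_trm \<sigma> (Var x) = subst_trm \<sigma> t \<Longrightarrow> t \<noteq> Var x \<Longrightarrow> x \<notin> vars_trm t"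
proof -
  have "size (\<sigma> x) < size (subst_trm \<sigma> t)" if "x \<in> vars_trm t" "t \<noteq> Var x"
    using that
  proof (induction t)
    case (Fn f ts)
    then obtain u where u: "u \<in> set ts" "x \<in> vars_trm u" by auto
    have "size (subst_trm \<sigma> u) \<le> size_list (size \<circ> subst_trm \<sigma>) ts"
      using u(1) by (intro size_list_estimation'[of u]) auto
    then have "size (subst_trm \<sigma> u) < size (subst_trm \<sigma> (Fn f ts))"
      by (simp add: size_list_map)
    with Fn.IH u show ?case by (cases "u = Var x") fastforce+
  qed simp
  then show "subst_trm \<sigma> (Var x) = subst_trm \<sigma> t \<Longrightarrow> t \<noteq> Var x \<Longrightarrow> x \<notin> vars_trm t"
    by fastforce
qed

lemma idem_relevant_mgu_eqs_elim:
  assumes "x \<notin> vars_trm r" and mgu: "idem_relevant_mgu_eqs \<mu> (subst_eqs (Var(x := r)) E)"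
  shows "idem_relevant_mgu_eqs (subst_comp (Var(x := r)) \<mu>) ((Var x, r) # E)"
proof -
  let ?\<epsilon> = "Var(x := r)"
  have r: "subst_trm ?\<epsilon> r = r" using assms(1) by (intro subst_trm_id_on) auto
  have "subst_trm (subst_comp ?\<epsilon> \<mu>) (Var x) = subst_trm (subst_comp ?\<epsilon> \<mu>) r"
    by (simp only: subst_trm_comp r) (simp add: subst_comp_def)
  then have unif: "subst_comp ?\<epsilon> \<mu> \<in> unifiers ((Var x, r) # E)"
    using mgu by (simp add: idem_relevant_mgu_eqs_def unifiers_Cons unifiers_subst_eqs)
  have general: "subst_comp (subst_comp ?\<epsilon> \<mu>) \<tau> = \<tau>" if "\<tau> \<in> unifiers ((Var x, r) # E)" for \<tau>
  proof -
    from that have "\<tau> x = subst_trm \<tau> r" "\<tau> \<in> unifiers E" by (auto simp: unifiers_Cons)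
    moreover from this(1) have "subst_comp ?\<epsilon> \<tau> = \<tau>" by (auto simp: subst_comp_def)
    ultimately show ?thesis
      using mgu by (simp add: idem_relevant_mgu_eqs_def subst_comp_assoc unifiers_subst_eqs)
  qed
  have "subst_vars \<mu> \<subseteq> eqs_vars ((Var x, r) # E)"
    using mgu eqs_vars_subst_eqs_elim[OF assms(1), of E] by (auto simp: idem_relevant_mgu_eqs_def eqs_vars_Cons)
  moreover have "subst_vars ?\<epsilon> \<subseteq> eqs_vars ((Var x, r) # E)"
    using subst_vars_upd[of x r] by (auto simp: eqs_vars_Cons)
  ultimately have "subst_vars (subst_comp ?\<epsilon> \<mu>) \<subseteq> eqs_vars ((Var x, r) # E)"
    using subst_vars_comp[of ?\<epsilon> \<mu>] by blast
  with unif general show ?thesis by (simp add: idem_relevant_mgu_eqs_def)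
qed

lemma idem_relevant_mgu_eqs_transfer:
  "idem_relevant_mgu_eqs \<mu> E' \<Longrightarrow> unifiers E = unifiers E' \<Longrightarrow> eqs_vars E' \<subseteq> eqs_vars E \<Longrightarrow>
   idem_relevant_mgu_eqs \<mu> E"
  by (auto simp: idem_relevant_mgu_eqs_def)

lemma orient_var_eq:
  assumes "subst_trm \<sigma> s = subst_trm \<sigma> t" "s \<noteq> t" "(\<exists>x. s = Var x) \<or> (\<exists>x. t = Var x)"
    and fixes_V: "\<forall>x\<in>V. \<sigma> x = Var x"
  obtains x r where "x \<notin> V" "x \<notin> vars_trm r" "\<sigma> x = subst_trm \<sigma> r"
    "(s = Var x \<and> t = r) \<or> (s = r \<and> t = Var x)"
proof -
  have oriented: "\<exists>x r. x \<notin> V \<and> x \<notin> vars_trm r \<and> \<sigma> x = subst_trm \<sigma> r \<and>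
      ((Var y = Var x \<and> u = r) \<or> (Var y = r \<and> u = Var x))"
    if eq: "\<sigma> y = subst_trm \<sigma> u" and ne: "u \<noteq> Var y" for y u
  proof (cases "y \<in> V")
    case False
    with eq ne occurs_check[of \<sigma> y u] show ?thesis by auto
  next
    case True
    with eq fixes_V have "subst_trm \<sigma> u = Var y" by simp
    then obtain z where z: "u = Var z" "\<sigma> z = Var y" by (cases u) auto
    with ne fixes_V have "z \<notin> V" by auto
    with z ne True fixes_V show ?thesis by (intro exI[of _ z] exI[of _ "Var y"]) auto
  qed
  from assms(3) consider y where "s = Var y" | y where "t = Var y" by blast
  then show ?thesis
  proof cases
    case 1
    with assms(1,2) oriented[of y t] that show ?thesis by auto
  next
    case 2
    with assms(1,2) oriented[of y s] that show ?thesis by auto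
  qed
qed

lemma idem_relevant_mgu_eqs_fixing:
  assumes "\<sigma> \<in> unifiers E" "\<forall>x\<in>V. \<sigma> x = Var x"
  shows "\<exists>\<mu>. idem_relevant_mgu_eqs \<mu> E \<and> (\<forall>x\<in>V. \<mu> x = Var x)"
  using assms
proof (induction E rule: wf_induct_rule[OF wf_measures[of "[\<lambda>E. card (eqs_vars E), eqs_size]"]])
  case (1 E)
  show ?case
  proof (cases E)
    case Nil
    with idem_relevant_mgu_eqs_Nil show ?thesis by auto
  next
    case (Cons st E')
    obtain s t where E: "E = (s,t) # E'" using Cons by (cases st) auto
    have st: "subst_trm \<sigma> s = subst_trm \<sigma> t" and \<sigma>: "\<sigma> \<in> unifiers E'"
      using "1.prems"(1) E by (auto simp: unifiers_Cons)
    have sub: "eqs_vars E' \<subseteq> eqs_vars E" using E by (auto simp: eqs_vars_Cons)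
    consider (triv) "s = t" | (var) "s \<noteq> t" "(\<exists>x. s = Var x) \<or> (\<exists>x. t = Var x)"
      | (decompose) f ss g ts where "s = Fn f ss" "t = Fn g ts"
      by (cases s; cases t) auto
    then show ?thesis
    proof cases
      case triv
      have "card (eqs_vars E') \<le> card (eqs_vars E)" using sub by (simp add: card_mono)
      moreover have "eqs_size E' < eqs_size E" using E by (simp add: eqs_size_def)
      ultimately have "(E', E) \<in> measures [\<lambda>E. card (eqs_vars E), eqs_size]"
        by (simp add: le_less)
      from "1.IH"[OF this \<sigma> "1.prems"(2)] obtain \<mu>
        where "idem_relevant_mgu_eqs \<mu> E'" "\<forall>x\<in>V. \<mu> x = Var x" by blast
      moreover have "unifiers E = unifiers E'" using E triv by (simp add: unifiers_Cons)
      ultimately show ?thesis using sub idem_relevant_mgu_eqs_transfer by blast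
    next
      case var
      from st var "1.prems"(2) obtain x r where xr: "x \<notin> V" "x \<notin> vars_trm r" "\<sigma> x = subst_trm \<sigma> r"
        "(s = Var x \<and> t = r) \<or> (s = r \<and> t = Var x)"
        by (rule orient_var_eq)
      let ?\<epsilon> = "Var(x := r)"
      have U: "unifiers E = unifiers ((Var x, r) # E')" and V: "eqs_vars E = eqs_vars ((Var x, r) # E')"
        using E xr(4) by (auto simp: unifiers_Cons eqs_vars_Cons)
      have "subst_comp ?\<epsilon> \<sigma> = \<sigma>" using xr(3) by (auto simp: subst_comp_def)
      with \<sigma> have \<sigma>': "\<sigma> \<in> unifiers (subst_eqs ?\<epsilon> E')" by (simp add: unifiers_subst_eqs)
      have "eqs_vars (subst_eqs ?\<epsilon> E') \<subset> eqs_vars E"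
        using eqs_vars_subst_eqs_elim[OF xr(2), of E'] V by (auto simp: eqs_vars_Cons)
      then have "(subst_eqs ?\<epsilon> E', E) \<in> measures [\<lambda>E. card (eqs_vars E), eqs_size]"
        by (simp add: psubset_card_mono)
      from "1.IH"[OF this \<sigma>' "1.prems"(2)] obtain \<mu>
        where \<mu>: "idem_relevant_mgu_eqs \<mu> (subst_eqs ?\<epsilon> E')" "\<forall>x\<in>V. \<mu> x = Var x" by blast
      have "idem_relevant_mgu_eqs (subst_comp ?\<epsilon> \<mu>) E"
        using idem_relevant_mgu_eqs_elim[OF xr(2) \<mu>(1)] U V by (simp add: idem_relevant_mgu_eqs_transfer)
      moreover have "\<forall>y\<in>V. subst_comp ?\<epsilon> \<mu> y = Var y"
        using \<mu>(2) xr(1) by (auto simp: subst_comp_def)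
      ultimately show ?thesis by blast
    next
      case decompose
      with st have "f = g" and args: "map (subst_trm \<sigma>) ss = map (subst_trm \<sigma>) ts" by auto
      then have len: "length ss = length ts" using map_eq_imp_length_eq by blast
      define E'' where "E'' = zip ss ts @ E'"
      have U: "unifiers E'' = unifiers E"
        using decompose \<open>f = g\<close> E unifiers_zip[OF len]
        by (auto simp: E''_def unifiers_append unifiers_Cons)
      have V: "eqs_vars E'' = eqs_vars E"
        using decompose E eqs_vars_zip[OF len] by (auto simp: E''_def eqs_vars_def)
      have "eqs_size E'' < eqs_size E"
        using decompose E eqs_size_zip[OF len] by (simp add: E''_def eqs_size_def)
      with U V "1.IH"[of E''] "1.prems" show ?thesis
        by (auto simp: idem_relevant_mgu_eqs_def)
    qed
  qed
qed

lemma idem_relevant_mgu_fixing: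
  assumes "subst_atom \<sigma> a = subst_atom \<sigma> b" "\<forall>x\<in>V. \<sigma> x = Var x"
  obtains \<mu> where "idem_relevant_mgu \<mu> a b" "\<forall>x\<in>V. \<mu> x = Var x"
    "\<And>\<tau>. subst_atom \<tau> a = subst_atom \<tau> b \<Longrightarrow> subst_comp \<mu> \<tau> = \<tau>"
proof -
  obtain f ts g us where ab: "a = Atom f ts" "b = Atom g us" by (cases a; cases b)
  with assms(1) have "f = g" and "map (subst_trm \<sigma>) ts = map (subst_trm \<sigma>) us" by auto
  then have len: "length ts = length us" using map_eq_imp_length_eq by blast
  have U: "\<tau> \<in> unifiers (zip ts us) \<longleftrightarrow> subst_atom \<tau> a = subst_atom \<tau> b" for \<tau>
    using ab \<open>f = g\<close> unifiers_zip[OF len] by simp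
  have V: "eqs_vars (zip ts us) = vars_atom a \<union> vars_atom b"
    using ab eqs_vars_zip[OF len] by simp
  from idem_relevant_mgu_eqs_fixing[of \<sigma> "zip ts us" V] obtain \<mu>
    where \<mu>: "idem_relevant_mgu_eqs \<mu> (zip ts us)" "\<forall>x\<in>V. \<mu> x = Var x"
    using U assms by blast
  have general: "subst_comp \<mu> \<tau> = \<tau>" if "subst_atom \<tau> a = subst_atom \<tau> b" for \<tau>
    using \<mu>(1) U that by (auto simp: idem_relevant_mgu_eqs_def)
  have unif: "subst_atom \<mu> a = subst_atom \<mu> b"
    using \<mu>(1) U by (auto simp: idem_relevant_mgu_eqs_def)
  have "idem_relevant_mgu \<mu> a b"
    unfolding idem_relevant_mgu_def is_mgu_def
    using unif general[OF unif] general[symmetric] \<mu>(1) V by (auto simp: idem_relevant_mgu_eqs_def)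
  with \<mu>(2) general that show ?thesis by blast
qed

lemma prios_psubst [simp]: "prios (psubst \<sigma> G) = prios G"
  by (force simp: prios_def psubst_def)

lemma prios_shift [simp]: "prios (shift f G) = f ` prios G"
  by (force simp: prios_def shift_def)

lemma prios_Un [simp]: "prios (A \<union> B) = prios A \<union> prios B"
  by (simp add: prios_def image_Un)

lemma prios_insert [simp]: "prios (insert x A) = insert (snd x) (prios A)"
  by (simp add: prios_def)

lemma prios_empty [simp]: "prios {} = {}"
  by (simp add: prios_def)

lemma prios_mem: "(a,p) \<in> G \<Longrightarrow> p \<in> prios G"
  by (force simp: prios_def)

lemma prios_memE: "p \<in> prios G \<Longrightarrow> (\<And>a. (a,p) \<in> G \<Longrightarrow> thesis) \<Longrightarrow> thesis"
  by (auto simp: prios_def)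

lemma psubst_Un [simp]: "psubst \<sigma> (A \<union> B) = psubst \<sigma> A \<union> psubst \<sigma> B"
  by (simp add: psubst_def image_Un)

lemma shift_Un [simp]: "shift f (A \<union> B) = shift f A \<union> shift f B"
  by (simp add: shift_def image_Un)

lemma shift_insert: "shift f (insert (a,p) G) = insert (a, f p) (shift f G)"
  by (simp add: shift_def)

lemma psubst_Var [simp]: "psubst Var G = G"
  by (auto simp: psubst_def)

lemma shift_id [simp]: "shift id G = G"
  by (auto simp: shift_def)

lemma shift_shift: "shift f (shift g G) = shift (f \<circ> g) G"
  by (force simp: shift_def)

lemma shift_cong: "(\<And>p. p \<in> prios G \<Longrightarrow> f p = g p) \<Longrightarrow> shift f G = shift g G"
  unfolding shift_def prios_def by (force intro!: image_cong)

lemma shift_psubst: "shift f (psubst \<sigma> G) = psubst \<sigma> (shift f G)"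
  by (force simp: shift_def psubst_def)

lemma mem_psubst: "x \<in> psubst \<sigma> G \<longleftrightarrow> (\<exists>a p. (a,p) \<in> G \<and> x = (subst_atom \<sigma> a, p))"
  by (force simp: psubst_def)

lemma mem_shift: "x \<in> shift f G \<longleftrightarrow> (\<exists>a p. (a,p) \<in> G \<and> x = (a, f p))"
  by (force simp: shift_def)

lemma pgoal_unique: "pgoal G \<Longrightarrow> (a,p) \<in> G \<Longrightarrow> (a',p) \<in> G \<Longrightarrow> a = a'"
  unfolding pgoal_def inj_on_def by force

lemma pgoal_subset: "pgoal G \<Longrightarrow> H \<subseteq> G \<Longrightarrow> pgoal H"
  unfolding pgoal_def by (meson infinite_super inj_on_subset)

lemma pgoal_psubst: "pgoal G \<Longrightarrow> pgoal (psubst \<sigma> G)"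
  unfolding pgoal_def psubst_def inj_on_def by force

lemma pgoal_shift: "inj_on f (prios G) \<Longrightarrow> pgoal G \<Longrightarrow> pgoal (shift f G)"
  unfolding pgoal_def shift_def inj_on_def prios_def by force

lemma pgoal_Un: "pgoal A \<Longrightarrow> pgoal B \<Longrightarrow> prios A \<inter> prios B = {} \<Longrightarrow> pgoal (A \<union> B)"
  unfolding pgoal_def inj_on_def prios_def by (auto; force)

lemma pgoal_Union_pcat: "pcat_ok Gs \<Longrightarrow> pgoal (\<Union>(set Gs))"
proof (induction Gs)
  case Nil
  then show ?case by (simp add: pgoal_def)
next
  case (Cons G Gs)
  then have "prios G \<inter> prios (\<Union>(set Gs)) = {}"
    by (force simp: pcat_ok_def prio_less_def prios_def)
  with Cons show ?case by (simp add: pgoal_Un pcat_ok_def)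
qed

lemma pcat_duplicate:
  assumes "pcat_ok [A, B, C, shift \<pi> B, D]"
  shows "\<forall>p\<in>prios B. p < \<pi> p" "prios (A \<union> B \<union> C \<union> D) \<inter> prios (shift \<pi> B) = {}"
proof -
  have order: "prio_less A (shift \<pi> B)" "prio_less B (shift \<pi> B)" "prio_less C (shift \<pi> B)"
    "prio_less (shift \<pi> B) D"
    using assms by (auto simp: pcat_ok_def)
  then show "\<forall>p\<in>prios B. p < \<pi> p" by (auto simp: prio_less_def)
  have "prios X \<inter> prios Y = {}" if "prio_less X Y" for X Y :: "('f,'v) pgoal"
    using that unfolding prio_less_def by fastforce
  with order show "prios (A \<union> B \<union> C \<union> D) \<inter> prios (shift \<pi> B) = {}"
    unfolding prios_Un Int_Un_distrib2 by (metis Int_commute Un_empty)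
qed

lemma card_shift: "pgoal G \<Longrightarrow> inj_on f (prios G) \<Longrightarrow> card (shift f G) = card G"
  unfolding shift_def pgoal_def by (intro card_image) (force simp: inj_on_def prios_def)

lemma prios_Diff_single:
  assumes "pgoal G" "(a,q) \<in> G"
  shows "prios (G - {(a,q)}) = prios G - {q}"
proof -
  have "b = a" if "(b,q) \<in> G" for b using pgoal_unique[OF assms(1) that assms(2)] .
  then show ?thesis by (force simp: prios_def)
qed

lemma finite_prios: "pgoal G \<Longrightarrow> finite (prios G)"
  by (simp add: pgoal_def prios_def)

lemma front_unique:
  assumes "pgoal G"
    and "G = insert (a,p) K" "(a,p) \<notin> K" "\<forall>q\<in>prios K. p < q"
    and "G = insert (a',p') K'" "(a',p') \<notin> K'" "\<forall>q\<in>prios K'. p' < q"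
  shows "a' = a \<and> p' = p \<and> K' = K"
proof -
  have "p' = p"
  proof (rule ccontr)
    assume "p' \<noteq> p"
    with assms have "(a',p') \<in> K" "(a,p) \<in> K'" by auto
    with assms(4,7) show False by (fastforce dest: prios_mem)
  qed
  moreover have "a' = a" using pgoal_unique[OF assms(1), of a p a'] assms \<open>p' = p\<close> by auto
  ultimately show ?thesis using assms by (metis Diff_insert_absorb)
qed

lemma shifting_inj: "shifting \<pi> \<Longrightarrow> inj \<pi>"
  by (simp add: shifting_def strict_mono_imp_inj_on)

lemma shifting_less: "shifting \<pi> \<Longrightarrow> \<pi> x < \<pi> y \<longleftrightarrow> x < y"
  by (simp add: shifting_def strict_mono_less)

lemma shifting_id: "shifting id"
  by (simp add: shifting_def strict_mono_def)

lemma shifting_translate: "shifting (\<lambda>x::rat. x + N)"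
proof -
  have "bij (\<lambda>x::rat. x + N)"
    by (rule o_bij[where g="\<lambda>x. x - N"]) auto
  then show ?thesis by (simp add: shifting_def strict_mono_def)
qed

lemma translate_above:
  assumes "finite (X::rat set)" "finite Y"
  obtains N where "\<forall>x\<in>X. \<forall>y\<in>Y. x < y + N"
proof -
  define M where "M = Max (insert 0 (abs ` (X \<union> Y)))"
  have bound: "\<bar>z\<bar> \<le> M" if "z \<in> X \<union> Y" for z
    using assms that by (auto simp: M_def)
  have "x < y + (2*M + 1)" if "x \<in> X" "y \<in> Y" for x y
  proof -
    have "\<bar>x\<bar> \<le> M" "\<bar>y\<bar> \<le> M" using bound that by auto
    then show ?thesis by linarith
  qed
  with that show ?thesis by blast
qed

lemma strict_mono_on_merge:
  fixes f :: "rat \<Rightarrow> rat"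
  assumes f: "strict_mono_on K f" "f ` K \<subseteq> L" and "shifting \<gamma>" "shifting \<gamma>'"
    and "\<forall>p\<in>\<gamma> ` S. \<forall>q\<in>K. p < q" "\<forall>p\<in>K. \<forall>q\<in>\<gamma> ` Q. p < q"
    and "\<forall>p\<in>\<gamma>' ` S. \<forall>q\<in>L. p < q" "\<forall>p\<in>L. \<forall>q\<in>\<gamma>' ` Q. p < q"
  obtains f' where "strict_mono_on (\<gamma> ` (S \<union> Q) \<union> K) f'" "\<forall>p\<in>K. f' p = f p"
    "\<forall>p\<in>S \<union> Q. f' (\<gamma> p) = \<gamma>' p"
proof
  let ?f' = "\<lambda>p. if p \<in> K then f p else \<gamma>' (inv \<gamma> p)"
  have inv: "inv \<gamma> (\<gamma> x) = x" for x using shifting_inj[OF assms(3)] by (simp add: inv_f_f)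
  show "\<forall>p\<in>K. ?f' p = f p" by simp
  show "\<forall>p\<in>S \<union> Q. ?f' (\<gamma> p) = \<gamma>' p" using assms(5,6) inv by fastforce
  show "strict_mono_on (\<gamma> ` (S \<union> Q) \<union> K) ?f'"
  proof (rule strict_mono_onI)
    fix x y assume "x \<in> \<gamma> ` (S \<union> Q) \<union> K" "y \<in> \<gamma> ` (S \<union> Q) \<union> K" "x < y"
    then consider "x \<in> K" "y \<in> K"
      | x' where "x \<in> K" "y = \<gamma> x'" "x' \<in> Q" "y \<notin> K"
      | y' where "x = \<gamma> y'" "y' \<in> S" "y \<in> K" "x \<notin> K"
      | x' y' where "x = \<gamma> x'" "y = \<gamma> y'" "x \<notin> K" "y \<notin> K"
      using assms(5,6) by fastforce
    then show "?f' x < ?f' y"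
    proof cases
      case 1
      with f(1) \<open>x < y\<close> show ?thesis by (simp add: strict_mono_on_def)
    next
      case 2
      with f(2) assms(8) inv show ?thesis by fastforce
    next
      case 3
      with f(2) assms(7) inv show ?thesis by fastforce
    next
      case 4
      with \<open>x < y\<close> inv assms(3,4) show ?thesis by (simp add: shifting_less)
    qed
  qed
qed

lemma shift_merge:
  fixes f :: "rat \<Rightarrow> rat"
  assumes f: "strict_mono_on (prios K) f"
    and \<gamma>s: "shifting \<gamma>s" "pcat_ok [shift \<gamma>s (psubst \<xi> Ms), K, shift \<gamma>s (psubst \<xi> Mq)]"
    and \<gamma>b: "shifting \<gamma>b" "pcat_ok [shift \<gamma>b (psubst \<xi> Ms), shift f K \<union> E, shift \<gamma>b (psubst \<xi> Mq)]"
  obtains f' where "strict_mono_on (prios (K \<union> shift \<gamma>s (psubst \<xi> (Ms \<union> Mq)))) f'"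
    "shift f' (K \<union> shift \<gamma>s (psubst \<xi> (Ms \<union> Mq))) = shift f K \<union> shift \<gamma>b (psubst \<xi> (Ms \<union> Mq))"
    "\<forall>p\<in>prios K. f' p = f p" "\<forall>p\<in>prios (Ms \<union> Mq). f' (\<gamma>s p) = \<gamma>b p"
proof -
  have ords: "\<forall>p\<in>\<gamma>s ` prios Ms. \<forall>q\<in>prios K. p < q" "\<forall>p\<in>prios K. \<forall>q\<in>\<gamma>s ` prios Mq. p < q"
    using \<gamma>s(2) by (auto simp: pcat_ok_def prio_less_def)
  have ordb: "\<forall>p\<in>\<gamma>b ` prios Ms. \<forall>q\<in>prios (shift f K \<union> E). p < q"
    "\<forall>p\<in>prios (shift f K \<union> E). \<forall>q\<in>\<gamma>b ` prios Mq. p < q"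
    using \<gamma>b(2) by (auto simp: pcat_ok_def prio_less_def)
  have "f ` prios K \<subseteq> prios (shift f K \<union> E)" by simp
  then obtain f' where f': "strict_mono_on (\<gamma>s ` (prios Ms \<union> prios Mq) \<union> prios K) f'"
    "\<forall>p\<in>prios K. f' p = f p" "\<forall>p\<in>prios Ms \<union> prios Mq. f' (\<gamma>s p) = \<gamma>b p"
    using strict_mono_on_merge[OF f _ \<gamma>s(1) \<gamma>b(1) ords ordb] by blast
  have "shift f' K = shift f K" by (rule shift_cong) (simp add: f'(2))
  moreover have "shift f' (shift \<gamma>s (psubst \<xi> (Ms \<union> Mq))) = shift \<gamma>b (psubst \<xi> (Ms \<union> Mq))"
    unfolding shift_shift by (rule shift_cong) (simp add: f'(3))
  ultimately show ?thesis using that f' by (simp add: image_Un Un_ac)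
qed

lemma pgoal_vars_Un [simp]: "pgoal_vars (A \<union> B) = pgoal_vars A \<union> pgoal_vars B"
  by (auto simp: pgoal_vars_def)

lemma pgoal_vars_insert [simp]: "pgoal_vars (insert x A) = vars_atom (fst x) \<union> pgoal_vars A"
  by (auto simp: pgoal_vars_def)

lemma pgoal_vars_shift [simp]: "pgoal_vars (shift f A) = pgoal_vars A"
  by (force simp: pgoal_vars_def shift_def)

lemma pgoal_vars_psubst: "pgoal_vars (psubst \<sigma> A) = (\<Union>x\<in>pgoal_vars A. vars_trm (\<sigma> x))"
  by (force simp: pgoal_vars_def psubst_def vars_subst_atom)

lemma pgoal_vars_psubst_subset: "pgoal_vars (psubst \<sigma> A) \<subseteq> pgoal_vars A \<union> subst_vars \<sigma>"
  using vars_subst_var by (fastforce simp: pgoal_vars_psubst)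

lemma finite_pgoal_vars: "finite G \<Longrightarrow> finite (pgoal_vars G)"
  by (simp add: pgoal_vars_def)

lemma vars_atom_subset_pgoal_vars: "(a,p) \<in> G \<Longrightarrow> vars_atom a \<subseteq> pgoal_vars G"
  by (force simp: pgoal_vars_def)

lemma psubst_id_on: "(\<And>x. x \<in> pgoal_vars G \<Longrightarrow> \<sigma> x = Var x) \<Longrightarrow> psubst \<sigma> G = G"
proof -
  assume "\<And>x. x \<in> pgoal_vars G \<Longrightarrow> \<sigma> x = Var x"
  then have "subst_atom \<sigma> a = a" if "(a,p) \<in> G" for a p
    using vars_atom_subset_pgoal_vars[OF that] by (intro subst_atom_id_on) auto
  then show ?thesis by (force simp: psubst_def)
qed

lemma clause_vars_rename:
  "clause_vars (rename_clause (\<lambda>x. Var (g x)) c) = g ` clause_vars c"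
  by (auto simp: clause_vars_def rename_clause_def vars_subst_atom pgoal_vars_psubst)

lemma finite_clause_vars: "is_clause c \<Longrightarrow> finite (clause_vars c)"
  by (auto simp: clause_vars_def is_clause_def pgoal_def finite_pgoal_vars)

lemma finite_clause_vars_rename: "is_clause c \<Longrightarrow> finite (clause_vars (rename_clause \<xi> c))"
  by (cases c)
    (auto simp: clause_vars_def rename_clause_def is_clause_def pgoal_def psubst_def finite_pgoal_vars)

lemma bij_avoiding:
  assumes "infinite (UNIV :: 'v set)" "finite (S :: 'v set)" "finite (W :: 'v set)"
  obtains g where "bij g" "g ` S \<inter> W = {}"
proof -
  have "infinite (UNIV - (S \<union> W))" using assms by (intro Diff_infinite_finite) auto
  then obtain T where T: "T \<subseteq> UNIV - (S \<union> W)" "finite T" "card T = card S"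
    using infinite_arbitrarily_large by meson
  then obtain h where h: "bij_betw h S T" using assms(2) by (metis finite_same_card_bij)
  have ST: "S \<inter> T = {}" using T by auto
  text \<open>Swap \<open>S\<close> and \<open>T\<close> along \<open>h\<close> and fix everything else.\<close>
  define g where "g x = (if x \<in> S then h x else if x \<in> T then inv_into S h x else x)" for x
  have "g (g x) = x" for x
  proof -
    consider "x \<in> S" | "x \<in> T" | "x \<notin> S" "x \<notin> T" by blast
    then show ?thesis
    proof cases
      case 1
      with h ST have "h x \<in> T" "h x \<notin> S" by (auto simp: bij_betw_def)
      with 1 h show ?thesis by (simp add: g_def bij_betw_def inv_into_f_f)
    next
      case 2
      with h ST have "inv_into S h x \<in> S" "h (inv_into S h x) = x" "x \<notin> S"
        by (auto simp: bij_betw_def inv_into_into f_inv_into_f)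
      with 2 show ?thesis by (simp add: g_def)
    qed (simp add: g_def)
  qed
  then have "bij g" by (intro o_bij[of g g]) auto
  moreover have "g ` S \<inter> W = {}" using h T by (auto simp: g_def bij_betw_def)
  ultimately show ?thesis using that by blast
qed

lemma fresh_variant:
  fixes c :: "('f,'v) clause"
  assumes "infinite (UNIV :: 'v set)" "finite (W :: 'v set)" "is_clause c"
  obtains \<xi> \<tau> :: "('f,'v) subst" where "renaming \<xi>" "clause_vars (rename_clause \<xi> c) \<inter> W = {}"
    "\<And>x. x \<in> W \<Longrightarrow> \<tau> x = \<zeta> x"
    "\<And>a. vars_atom a \<subseteq> clause_vars c \<Longrightarrow> subst_atom \<tau> (subst_atom \<xi> a) = subst_atom \<phi> a"
proof -
  obtain g where g: "bij g" "g ` clause_vars c \<inter> W = {}"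
    using bij_avoiding[OF assms(1) finite_clause_vars[OF assms(3)] assms(2)] by blast
  have ginv: "g (inv g y) = y" and invg: "inv g (g x) = x" for x y
    using g(1) by (simp_all add: bij_def surj_f_inv_f inv_f_f)
  define \<xi> :: "('f,'v) subst" where "\<xi> = (\<lambda>x. Var (g x))"
  define \<tau> where "\<tau> y = (if inv g y \<in> clause_vars c then \<phi> (inv g y) else \<zeta> y)" for y
  have "renaming \<xi>" using g(1) unfolding renaming_def \<xi>_def by blast
  moreover have "clause_vars (rename_clause \<xi> c) \<inter> W = {}"
    using g(2) clause_vars_rename[of g c] by (simp add: \<xi>_def)
  moreover have "\<tau> x = \<zeta> x" if "x \<in> W" for x
  proof -
    have "inv g x \<notin> clause_vars c"
    proof
      assume "inv g x \<in> clause_vars c"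
      then have "g (inv g x) \<in> g ` clause_vars c" by (rule imageI)
      with ginv g(2) that show False by auto
    qed
    then show ?thesis by (simp add: \<tau>_def)
  qed
  moreover have "subst_atom \<tau> (subst_atom \<xi> a) = subst_atom \<phi> a" if "vars_atom a \<subseteq> clause_vars c" for a
  proof -
    have "subst_comp \<xi> \<tau> x = \<phi> x" if "x \<in> clause_vars c" for x
      using that invg by (simp add: subst_comp_def \<xi>_def \<tau>_def)
    with that have "subst_atom (subst_comp \<xi> \<tau>) a = subst_atom \<phi> a"
      by (intro subst_atom_cong) auto
    then show ?thesis by simp
  qed
  ultimately show ?thesis using that by blast
qed


lemma is_stepE:
  assumes "is_step (G, (h,B), \<xi>, \<theta>, R)"
  obtains a p K \<pi> where "pgoal G" "is_clause (h,B)" "renaming \<xi>"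
    "G = insert (a,p) K" "(a,p) \<notin> K" "\<forall>q\<in>prios K. p < q"
    "pgoal_vars G \<inter> clause_vars (rename_clause \<xi> (h,B)) = {}"
    "idem_relevant_mgu \<theta> a (subst_atom \<xi> h)"
    "shifting \<pi>" "prios K \<inter> prios (shift \<pi> (psubst \<xi> B)) = {}"
    "R = psubst \<theta> (K \<union> shift \<pi> (psubst \<xi> B))"
  using assms unfolding is_step_def by auto

lemma step_exists:
  assumes "pgoal G" "G = insert (a,p) K" "(a,p) \<notin> K" "\<forall>q\<in>prios K. p < q"
    "is_clause (h,B)" "renaming \<xi>" "pgoal_vars G \<inter> clause_vars (rename_clause \<xi> (h,B)) = {}"
    "idem_relevant_mgu \<theta> a (subst_atom \<xi> h)"
  shows "\<exists>R. is_step (G, (h,B), \<xi>, \<theta>, R)"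
proof -
  have "finite (prios K)" "finite (prios B)"
    using assms(1,2,5) pgoal_subset[of G K] by (auto simp: is_clause_def intro: finite_prios)
  then obtain N where N: "\<forall>x\<in>prios K. \<forall>y\<in>prios B. x < y + N" by (rule translate_above)
  then have "prios K \<inter> prios (shift (\<lambda>x. x + N) (psubst \<xi> B)) = {}"
    by fastforce
  then have "is_step (G, (h,B), \<xi>, \<theta>, psubst \<theta> (K \<union> shift (\<lambda>x. x + N) (psubst \<xi> B)))"
    unfolding is_step_def prod.case using assms shifting_translate[of N] by blast
  then show ?thesis by blast
qed

text \<open>The witness is the lowering by the empty p-goal, with \<open>Var\<close> as substitution and the
  identity as shiftings.\<close>
lemma cong_lowering_variant:
  assumes s1: "is_step (G, (h,B), \<xi>1, \<alpha>1, psubst \<alpha>1 (K \<union> shift \<pi> (psubst \<xi>1 B)))"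
    and s2: "is_step (G, (h,B), \<xi>2, \<alpha>2, psubst \<alpha>2 (K \<union> shift \<pi> (psubst \<xi>2 B)))"
    and G: "G = insert (a,p) K" "(a,p) \<notin> K" "\<forall>q\<in>prios K. p < q" and "shifting \<pi>"
  shows "cong_lowering (G, (h,B), \<xi>2, \<alpha>2, psubst \<alpha>2 (K \<union> shift \<pi> (psubst \<xi>2 B)))
                       (G, (h,B), \<xi>1, \<alpha>1, psubst \<alpha>1 (K \<union> shift \<pi> (psubst \<xi>1 B)))"
  unfolding cong_lowering_def
  apply (rule exI[of _ G], rule exI[of _ h], rule exI[of _ B], rule exI[of _ \<xi>1], rule exI[of _ \<alpha>1])
  apply (rule exI[of _ "psubst \<alpha>1 (K \<union> shift \<pi> (psubst \<xi>1 B))"], rule exI[of _ G])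
  apply (rule exI[of _ \<xi>2], rule exI[of _ \<alpha>2], rule exI[of _ "psubst \<alpha>2 (K \<union> shift \<pi> (psubst \<xi>2 B))"])
  apply (rule exI[of _ a], rule exI[of _ p], rule exI[of _ K], rule exI[of _ "{}"], rule exI[of _ Var])
  apply (rule exI[of _ id], rule exI[of _ \<pi>], rule exI[of _ \<pi>], rule exI[of _ id])
  using assms shifting_id by auto

lemma complete_steps_variant:
  assumes S: "complete_steps S" and "(G, (h,B), \<xi>0, \<alpha>0, R0) \<in> S"
    and G: "G = insert (a,p) K" "(a,p) \<notin> K" "\<forall>q\<in>prios K. p < q"
    and "renaming \<xi>" "pgoal_vars G \<inter> clause_vars (rename_clause \<xi> (h,B)) = {}"
    and "idem_relevant_mgu \<alpha> a (subst_atom \<xi> h)"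
  shows "\<exists>R. (G, (h,B), \<xi>, \<alpha>, R) \<in> S"
proof -
  have s0: "is_step (G, (h,B), \<xi>0, \<alpha>0, R0)" using S assms(2) by (auto simp: complete_steps_def)
  then obtain a' p' K' \<pi> where w: "pgoal G" "is_clause (h,B)" "G = insert (a',p') K'" "(a',p') \<notin> K'"
    "\<forall>q\<in>prios K'. p' < q" "shifting \<pi>" "prios K' \<inter> prios (shift \<pi> (psubst \<xi>0 B)) = {}"
    "R0 = psubst \<alpha>0 (K' \<union> shift \<pi> (psubst \<xi>0 B))"
    by (rule is_stepE) blast
  with front_unique[OF w(1) G w(3-5)] have K': "K' = K" by auto
  define R where "R = psubst \<alpha> (K \<union> shift \<pi> (psubst \<xi> B))"
  have "prios K \<inter> prios (shift \<pi> (psubst \<xi> B)) = {}" using w(7) K' by simp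
  then have s: "is_step (G, (h,B), \<xi>, \<alpha>, R)"
    unfolding is_step_def prod.case R_def using w(1,2,6) G assms(6-8)
    by (intro conjI exI[of _ a] exI[of _ p] exI[of _ K] exI[of _ \<pi>]) simp_all
  have s0': "is_step (G, (h,B), \<xi>0, \<alpha>0, psubst \<alpha>0 (K \<union> shift \<pi> (psubst \<xi>0 B)))"
    using s0 w(8) K' by simp
  have "cong_lowering (G, (h,B), \<xi>, \<alpha>, R) (G, (h,B), \<xi>0, \<alpha>0, R0)"
    using cong_lowering_variant[OF s0' s[unfolded R_def] G w(6)] w(8) K' by (simp add: R_def)
  moreover have "cong_lowering (G, (h,B), \<xi>0, \<alpha>0, R0) (G, (h,B), \<xi>, \<alpha>, R)"
    using cong_lowering_variant[OF s[unfolded R_def] s0' G w(6)] w(8) K' by (simp add: R_def)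
  moreover have "\<forall>s\<in>S. \<forall>s'. cong_lowering s' s \<and> cong_lowering s s' \<longrightarrow> s' \<in> S"
    using S by (simp add: complete_steps_def)
  ultimately have "(G, (h,B), \<xi>, \<alpha>, R) \<in> S" using assms(2) by blast
  then show ?thesis by blast
qed

lemma step_res_pgoal:
  assumes "is_step (G, (h,B), \<xi>, \<theta>, R)"
  shows "pgoal R"
  using assms
proof (rule is_stepE)
  fix a p K \<pi>
  assume "pgoal G" "is_clause (h,B)" "G = insert (a,p) K" "shifting \<pi>"
    and disj: "prios K \<inter> prios (shift \<pi> (psubst \<xi> B)) = {}"
    and R: "R = psubst \<theta> (K \<union> shift \<pi> (psubst \<xi> B))"
  then have "pgoal K" using pgoal_subset by blast
  moreover have "pgoal (shift \<pi> (psubst \<xi> B))"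
    using \<open>is_clause (h,B)\<close> inj_on_subset[OF shifting_inj[OF \<open>shifting \<pi>\<close>] subset_UNIV]
    by (intro pgoal_shift pgoal_psubst) (auto simp: is_clause_def)
  ultimately
  show "pgoal R" using disj R by (simp add: pgoal_Un pgoal_psubst)
qed

lemma step_mgu_vars:
  assumes "is_step (G, (h,B), \<xi>, \<theta>, R)"
  shows "subst_vars \<theta> \<subseteq> pgoal_vars G \<union> clause_vars (rename_clause \<xi> (h,B))"
  using assms
proof (rule is_stepE)
  fix a p K
  assume "G = insert (a,p) K" and mgu: "idem_relevant_mgu \<theta> a (subst_atom \<xi> h)"
  then have "vars_atom a \<subseteq> pgoal_vars G" by simp
  moreover have "vars_atom (subst_atom \<xi> h) \<subseteq> clause_vars (rename_clause \<xi> (h,B))"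
    by (simp add: clause_vars_def rename_clause_def)
  ultimately show ?thesis using mgu by (auto simp: idem_relevant_mgu_def)
qed

lemma step_res_vars:
  assumes "is_step (G, (h,B), \<xi>, \<theta>, R)"
  shows "pgoal_vars R \<subseteq> pgoal_vars G \<union> clause_vars (rename_clause \<xi> (h,B))"
  using assms
proof (rule is_stepE)
  fix a p K \<pi>
  assume G: "G = insert (a,p) K" and R: "R = psubst \<theta> (K \<union> shift \<pi> (psubst \<xi> B))"
  let ?V = "pgoal_vars G \<union> clause_vars (rename_clause \<xi> (h,B))"
  have "pgoal_vars K \<subseteq> pgoal_vars G" using G by simp
  moreover have "pgoal_vars (psubst \<xi> B) \<subseteq> clause_vars (rename_clause \<xi> (h,B))"
    by (simp add: clause_vars_def rename_clause_def)
  ultimately have "pgoal_vars (K \<union> shift \<pi> (psubst \<xi> B)) \<subseteq> ?V" by auto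
  then show ?thesis
    using R step_mgu_vars[OF assms] pgoal_vars_psubst_subset[of \<theta> "K \<union> shift \<pi> (psubst \<xi> B)"]
    by blast
qed

definition step_vars :: "('f,'v) step \<Rightarrow> 'v set" where
  "step_vars s = clause_vars (rename_clause (step_ren s) (step_clause s))"

definition derivation_vars :: "('f,'v) step list \<Rightarrow> 'v set" where
  "derivation_vars ss = (\<Union>s\<in>set ss. step_vars s)"

definition admissible_step ::
    "('f,'v) step set \<Rightarrow> ('f,'v) clause set \<Rightarrow> 'v set \<Rightarrow> ('f,'v) pgoal \<Rightarrow> ('f,'v) step \<Rightarrow> bool" where
  "admissible_step S P used G s \<longleftrightarrow>
     s \<in> S \<and> is_step s \<and> step_goal s = G \<and> step_clause s \<in> P \<and> step_vars s \<inter> used = {}"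

lemma pderiv_aux_Cons_iff:
  "pderiv_aux S P used G (s # ss) R \<longleftrightarrow>
   admissible_step S P used G s \<and> pderiv_aux S P (used \<union> step_vars s) (step_res s) ss R"
  by (auto simp: admissible_step_def step_vars_def)

lemma pderiv_aux_append:
  "pderiv_aux S P used G ss1 G' \<Longrightarrow> pderiv_aux S P (used \<union> derivation_vars ss1) G' ss2 R \<Longrightarrow>
   pderiv_aux S P used G (ss1 @ ss2) R"
  by (induction ss1 arbitrary: used G)
    (auto simp: pderiv_aux_Cons_iff derivation_vars_def Un_assoc simp del: pderiv_aux.simps(2))

lemma finite_derivation_vars:
  "pderiv_aux S P used G ss R \<Longrightarrow> program P \<Longrightarrow> finite (derivation_vars ss)"
  by (induction ss arbitrary: used G)
    (auto simp del: pderiv_aux.simps(2) simp: pderiv_aux_Cons_iff admissible_step_def program_def derivation_vars_def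
      step_vars_def finite_clause_vars_rename)

text \<open>A stack-queue rule together with a fixed choice of the split \<open>B = stack c | queue c\<close>
  of the body of every clause \<open>c = (h, B)\<close>.\<close>
locale stack_queue_rule =
  fixes P :: "('f,'v) clause set" and SQ :: "('f,'v) step set"
    and stack queue :: "('f,'v) clause \<Rightarrow> ('f,'v) pgoal"
  assumes infinite_vars: "infinite (UNIV :: 'v set)"
    and program: "program P"
    and complete: "complete_steps SQ"
    and split_body: "\<And>h B. is_clause (h,B) \<Longrightarrow>
      pcat_ok [stack (h,B), queue (h,B)] \<and> B = stack (h,B) \<union> queue (h,B)"
    and SQ_result: "\<And>G h B \<xi> \<mu> R. (G, (h,B), \<xi>, \<mu>, R) \<in> SQ \<Longrightarrow>
      \<exists>a p K \<gamma>. G = insert (a,p) K \<and> (a,p) \<notin> K \<and> (\<forall>q\<in>prios K. p < q) \<and> shifting \<gamma> \<and>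
        pcat_ok [shift \<gamma> (psubst \<xi> (stack (h,B))), K, shift \<gamma> (psubst \<xi> (queue (h,B)))] \<and>
        R = psubst \<mu> (shift \<gamma> (psubst \<xi> (stack (h,B))) \<union> K \<union> shift \<gamma> (psubst \<xi> (queue (h,B))))"

lemma stack_queue_rule_exists:
  assumes "infinite (UNIV :: 'v set)" "program P" "stack_queue (SQ :: ('f,'v) step set)"
  obtains stack queue where "stack_queue_rule P SQ stack queue"
proof -
  define split where "split h B Ms Mq \<longleftrightarrow> pcat_ok [Ms, Mq] \<and> B = Ms \<union> Mq \<and>
    (\<forall>G \<xi> \<mu> R. (G, (h, B), \<xi>, \<mu>, R) \<in> SQ \<longrightarrow>
      (\<exists>a p K \<gamma>. G = insert (a, p) K \<and> (a, p) \<notin> K \<and> (\<forall>q\<in>prios K. p < q) \<and> shifting \<gamma> \<and>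
         pcat_ok [shift \<gamma> (psubst \<xi> Ms), K, shift \<gamma> (psubst \<xi> Mq)] \<and>
         R = psubst \<mu> (shift \<gamma> (psubst \<xi> Ms) \<union> K \<union> shift \<gamma> (psubst \<xi> Mq))))"
    for h B Ms Mq
  have "\<forall>c. \<exists>M. is_clause c \<longrightarrow> split (fst c) (snd c) (fst M) (snd M)"
    using assms(3) by (fastforce simp: stack_queue_def split_def)
  then obtain M where M: "\<And>c. is_clause c \<Longrightarrow> split (fst c) (snd c) (fst (M c)) (snd (M c))"
    by metis
  have "(G, (h,B), \<xi>, \<mu>, R) \<in> SQ \<Longrightarrow> is_clause (h,B)" for G h B \<xi> \<mu> R
    using assms(3) by (auto simp: stack_queue_def complete_steps_def is_step_def)
  with M have "stack_queue_rule P SQ (\<lambda>c. fst (M c)) (\<lambda>c. snd (M c))"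
    using assms by unfold_locales (fastforce simp: stack_queue_def split_def)+
  with that show ?thesis by blast
qed

context stack_queue_rule
begin

lemma clause_in_program: "c \<in> P \<Longrightarrow> is_clause c"
  using program by (auto simp: program_def)

lemma stack_subset_body: "c \<in> P \<Longrightarrow> stack c \<subseteq> snd c"
  using split_body clause_in_program by (cases c) (metis Un_upper1 snd_conv)

lemma SQ_resultE:
  assumes "(G, (h,B), \<xi>, \<mu>, R) \<in> SQ" "pgoal G" "G = insert (a,p) K" "(a,p) \<notin> K" "\<forall>q\<in>prios K. p < q"
  obtains \<gamma> where "shifting \<gamma>"
    "pcat_ok [shift \<gamma> (psubst \<xi> (stack (h,B))), K, shift \<gamma> (psubst \<xi> (queue (h,B)))]"
    "R = psubst \<mu> (shift \<gamma> (psubst \<xi> (stack (h,B))) \<union> K \<union> shift \<gamma> (psubst \<xi> (queue (h,B))))"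
proof -
  from SQ_result[OF assms(1)] obtain a' p' K' \<gamma> where
    w: "G = insert (a',p') K'" "(a',p') \<notin> K'" "\<forall>q\<in>prios K'. p' < q" "shifting \<gamma>"
      "pcat_ok [shift \<gamma> (psubst \<xi> (stack (h,B))), K', shift \<gamma> (psubst \<xi> (queue (h,B)))]"
      "R = psubst \<mu> (shift \<gamma> (psubst \<xi> (stack (h,B))) \<union> K' \<union> shift \<gamma> (psubst \<xi> (queue (h,B))))"
    by blast
  from front_unique[OF assms(2-5) w(1-3)] have "K' = K" by simp
  with w that show ?thesis by blast
qed

lemma SQ_step_exists:
  assumes "pgoal G" "G = insert (a,p) K" "(a,p) \<notin> K" "\<forall>q\<in>prios K. p < q"
    "(h,B) \<in> P" "renaming \<xi>" "pgoal_vars G \<inter> clause_vars (rename_clause \<xi> (h,B)) = {}"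
    "idem_relevant_mgu \<alpha> a (subst_atom \<xi> h)"
  obtains \<gamma> where "shifting \<gamma>"
    "pcat_ok [shift \<gamma> (psubst \<xi> (stack (h,B))), K, shift \<gamma> (psubst \<xi> (queue (h,B)))]"
    "(G, (h,B), \<xi>, \<alpha>,
      psubst \<alpha> (shift \<gamma> (psubst \<xi> (stack (h,B))) \<union> K \<union> shift \<gamma> (psubst \<xi> (queue (h,B))))) \<in> SQ"
proof -
  have "is_clause (h,B)" using assms(5) clause_in_program by blast
  from step_exists[OF assms(1-4) this assms(6-8)] obtain R where "is_step (G, (h,B), \<xi>, \<alpha>, R)"
    by blast
  then obtain \<xi>0 \<alpha>0 R0 where "(G, (h,B), \<xi>0, \<alpha>0, R0) \<in> SQ"
    using complete unfolding complete_steps_def by blast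
  from complete_steps_variant[OF complete this assms(2-4,6-8)] obtain R'
    where R': "(G, (h,B), \<xi>, \<alpha>, R') \<in> SQ" by blast
  from SQ_resultE[OF R' assms(1-4)] R' that show ?thesis by metis
qed

end

section \<open>Proof trees\<close>

text \<open>A proof tree records what has become, in the current goal of a derivation, of one atom of
  an earlier goal: \<open>Leaf q\<close> is the atom of priority \<open>q\<close> of the current goal, and
  \<open>Node c \<phi> ch\<close> an atom that was resolved with the clause \<open>c\<close>, where \<open>\<phi>\<close> is the
  accumulated substitution on the variables of \<open>c\<close> and \<open>ch b\<close> is the tree of the body atom
  \<open>b\<close> of \<open>c\<close>.\<close>
datatype ('f,'v) ptree =
  Leaf rat
| Node "('f,'v) clause" "('f,'v) subst" "('f,'v) atom \<times> rat \<Rightarrow> ('f,'v) ptree"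

primrec ptree_atom :: "('f,'v) pgoal \<Rightarrow> ('f,'v) ptree \<Rightarrow> ('f,'v) atom" where
  "ptree_atom G (Leaf q) = (THE a. (a,q) \<in> G)"
| "ptree_atom G (Node c \<phi> ch) = subst_atom \<phi> (fst c)"

primrec ptree_ok :: "('f,'v) clause set \<Rightarrow> ('f,'v) pgoal \<Rightarrow> ('f,'v) ptree \<Rightarrow> bool" where
  "ptree_ok P G (Leaf q) \<longleftrightarrow> q \<in> prios G"
| "ptree_ok P G (Node c \<phi> ch) \<longleftrightarrow>
     c \<in> P \<and> (\<forall>b\<in>snd c. ptree_ok P G (ch b) \<and> ptree_atom G (ch b) = subst_atom \<phi> (fst b))"

primrec stack_leaves :: "(('f,'v) clause \<Rightarrow> ('f,'v) pgoal) \<Rightarrow> ('f,'v) ptree \<Rightarrow> rat set" where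
  "stack_leaves stack (Leaf q) = {q}"
| "stack_leaves stack (Node c \<phi> ch) = (\<Union>b\<in>stack c. stack_leaves stack (ch b))"

primrec inner_nodes :: "('f,'v) ptree \<Rightarrow> nat" where
  "inner_nodes (Leaf q) = 0"
| "inner_nodes (Node c \<phi> ch) = Suc (\<Sum>b\<in>snd c. inner_nodes (ch b))"

text \<open>The effect on a proof tree of a step that resolves the atom of priority \<open>p\<close> with the clause
  \<open>c\<close> renamed by \<open>\<xi>\<close>, with mgu \<open>\<theta>\<close> and body shifting \<open>\<gamma>\<close>.\<close>
primrec ptree_resolve :: "rat \<Rightarrow> ('f,'v) clause \<Rightarrow> ('f,'v) subst \<Rightarrow> ('f,'v) subst \<Rightarrow>
    (rat \<Rightarrow> rat) \<Rightarrow> ('f,'v) ptree \<Rightarrow> ('f,'v) ptree" where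
  "ptree_resolve p c \<xi> \<theta> \<gamma> (Leaf q) =
     (if q = p then Node c (subst_comp \<xi> \<theta>) (\<lambda>b. Leaf (\<gamma> (snd b))) else Leaf q)"
| "ptree_resolve p c \<xi> \<theta> \<gamma> (Node c' \<phi> ch) =
     Node c' (subst_comp \<phi> \<theta>) (\<lambda>b. ptree_resolve p c \<xi> \<theta> \<gamma> (ch b))"

lemma ptree_atom_Leaf: "pgoal G \<Longrightarrow> (a,q) \<in> G \<Longrightarrow> ptree_atom G (Leaf q) = a"
  using pgoal_unique by (simp, blast)

declare ptree_atom.simps(1) [simp del]

lemma stack_leaves_resolve:
  "stack_leaves stack (ptree_resolve p c \<xi> \<theta> \<gamma> t) \<subseteq> (stack_leaves stack t - {p}) \<union> \<gamma> ` prios (stack c)"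
  by (induction t) (auto simp: prios_def)

context
  fixes G a p K G' \<theta> \<xi> h
  assumes G: "pgoal G" "G = insert (a,p) K" "(a,p) \<notin> K"
    and G': "pgoal G'" "psubst \<theta> K \<subseteq> G'"
    and unif: "subst_atom \<theta> a = subst_atom \<theta> (subst_atom \<xi> h)"
begin

lemma ptree_atom_resolve:
  assumes "ptree_ok P G t"
  shows "ptree_atom G' (ptree_resolve p (h,B) \<xi> \<theta> \<gamma> t) = subst_atom \<theta> (ptree_atom G t)"
proof (cases t)
  case (Leaf q)
  show ?thesis
  proof (cases "q = p")
    case True
    have "ptree_atom G (Leaf p) = a" using G by (intro ptree_atom_Leaf) auto
    with Leaf True unif show ?thesis by simp
  next
    case False
    from assms Leaf obtain aq where aq: "(aq,q) \<in> G" by (auto elim: prios_memE)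
    with False G have "(subst_atom \<theta> aq, q) \<in> G'" using G' by (force simp: psubst_def)
    with aq False Leaf G G' show ?thesis by (simp add: ptree_atom_Leaf)
  qed
qed simp

lemma ptree_ok_resolve:
  assumes "psubst \<theta> (shift \<gamma> (psubst \<xi> B)) \<subseteq> G'" "(h,B) \<in> P"
  shows "ptree_ok P G t \<Longrightarrow> ptree_ok P G' (ptree_resolve p (h,B) \<xi> \<theta> \<gamma> t)"
proof (induction t)
  case (Leaf q)
  show ?case
  proof (cases "q = p")
    case True
    have "ptree_ok P G' (Leaf (\<gamma> pb)) \<and> ptree_atom G' (Leaf (\<gamma> pb)) = subst_atom \<theta> (subst_atom \<xi> ab)"
      if "(ab,pb) \<in> B" for ab pb
    proof -
      have "(subst_atom \<theta> (subst_atom \<xi> ab), \<gamma> pb) \<in> G'"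
        using that assms(1) by (force simp: psubst_def shift_def)
      with G'(1) show ?thesis by (auto simp: ptree_atom_Leaf intro: prios_mem)
    qed
    with True assms(2) show ?thesis by auto
  next
    case False
    from Leaf obtain aq where "(aq,q) \<in> G" by (auto elim: prios_memE)
    with False G G' have "(subst_atom \<theta> aq, q) \<in> G'" by (force simp: psubst_def)
    with False show ?thesis by (auto intro: prios_mem)
  qed
next
  case (Node c' \<phi> ch)
  then show ?case by (auto simp: ptree_atom_resolve)
qed

end

lemma (in stack_queue_rule) stack_leaves_subset:
  "ptree_ok P G t \<Longrightarrow> stack_leaves stack t \<subseteq> prios G"
  by (induction t) (use stack_subset_body in fastforce)+

text \<open>When the extra atom tracked by \<open>Node (h, B) \<phi> ch\<close> is resolved, the atom coming from the body
  atom \<open>b\<close> is placed at priority \<open>\<gamma> (snd b)\<close> and inherits the tree \<open>ch b\<close>.\<close>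
definition adopt_children :: "(rat \<Rightarrow> rat) \<Rightarrow> ('f,'v) pgoal \<Rightarrow> (('f,'v) atom \<times> rat \<Rightarrow> ('f,'v) ptree) \<Rightarrow>
    (rat \<Rightarrow> ('f,'v) ptree) \<Rightarrow> rat \<Rightarrow> ('f,'v) ptree" where
  "adopt_children \<gamma> B ch tr x = (if x \<in> \<gamma> ` prios B then ch (THE b. b \<in> B \<and> \<gamma> (snd b) = x) else tr x)"

lemma adopt_children_child:
  assumes "pgoal B" "inj \<gamma>" "b \<in> B"
  shows "adopt_children \<gamma> B ch tr (\<gamma> (snd b)) = ch b"
proof -
  have "(THE b'. b' \<in> B \<and> \<gamma> (snd b') = \<gamma> (snd b)) = b"
  proof (rule the_equality)
    fix b' assume b': "b' \<in> B \<and> \<gamma> (snd b') = \<gamma> (snd b)"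
    then have "snd b' = snd b" using assms(2) by (simp add: inj_eq)
    with b' assms(1,3) show "b' = b" by (auto simp: pgoal_def inj_on_def)
  qed (use assms(3) in simp)
  moreover have "\<gamma> (snd b) \<in> \<gamma> ` prios B" using assms(3) by (simp add: prios_def)
  ultimately show ?thesis by (simp add: adopt_children_def)
qed

lemma adopt_children_other: "x \<notin> \<gamma> ` prios B \<Longrightarrow> adopt_children \<gamma> B ch tr x = tr x"
  by (simp add: adopt_children_def)

definition extra_weight :: "('f,'v) pgoal \<Rightarrow> (rat \<Rightarrow> ('f,'v) ptree) \<Rightarrow> nat" where
  "extra_weight E tr = (\<Sum>q\<in>prios E. inner_nodes (tr q))"

lemma extra_weight_adopt_children:
  assumes "pgoal E" "q \<in> prios E" "tr q = Node (h,B) \<phi> ch" "pgoal B" "inj \<gamma>"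
    and disj: "(prios E - {q}) \<inter> \<gamma> ` prios B = {}"
    and E': "prios E' = (prios E - {q}) \<union> \<gamma> ` prios B"
  shows "extra_weight E' (adopt_children \<gamma> B ch tr) < extra_weight E tr"
proof -
  let ?tr' = "adopt_children \<gamma> B ch tr"
  have "extra_weight E' ?tr' =
      (\<Sum>x\<in>prios E - {q}. inner_nodes (?tr' x)) + (\<Sum>x\<in>\<gamma> ` prios B. inner_nodes (?tr' x))"
    unfolding extra_weight_def E' using assms(1,4) disj
    by (intro sum.union_disjoint) (auto simp: finite_prios)
  moreover have "(\<Sum>x\<in>prios E - {q}. inner_nodes (?tr' x)) = (\<Sum>x\<in>prios E - {q}. inner_nodes (tr x))"
  proof (rule sum.cong)
    fix x assume "x \<in> prios E - {q}"
    with disj have "?tr' x = tr x" by (intro adopt_children_other) blast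
    then show "inner_nodes (?tr' x) = inner_nodes (tr x)" by simp
  qed simp
  moreover have "(\<Sum>x\<in>\<gamma> ` prios B. inner_nodes (?tr' x)) = (\<Sum>p\<in>prios B. inner_nodes (?tr' (\<gamma> p)))"
    using assms(5) by (simp add: sum.reindex inj_on_subset)
  moreover have "\<dots> = (\<Sum>b\<in>B. inner_nodes (?tr' (\<gamma> (snd b))))"
    using assms(4) unfolding prios_def pgoal_def by (simp add: sum.reindex)
  moreover have "\<dots> = (\<Sum>b\<in>B. inner_nodes (ch b))"
    using assms(4,5) by (simp add: adopt_children_child)
  moreover have "extra_weight E tr = inner_nodes (tr q) + (\<Sum>x\<in>prios E - {q}. inner_nodes (tr x))"
    unfolding extra_weight_def using finite_prios[OF assms(1)] assms(2) by (rule sum.remove)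
  ultimately show ?thesis using assms(3) by simp
qed


context stack_queue_rule
begin

section \<open>Embedding a derivation into a derivation from a larger goal\<close>

text \<open>The extra atom \<open>(a, q)\<close> of the larger goal is tracked by the proof tree \<open>tr q\<close> of the
  atom of the original goal it duplicates: under \<open>\<zeta>\<close> it is an instance of the atom the tree
  denotes, and all stack leaves of the tree are scheduled before it (at priorities moved by
  \<open>f\<close>).\<close>
definition tracks :: "('f,'v) pgoal \<Rightarrow> (rat \<Rightarrow> rat) \<Rightarrow> ('f,'v) subst \<Rightarrow> (rat \<Rightarrow> ('f,'v) ptree) \<Rightarrow>
    ('f,'v) atom \<Rightarrow> rat \<Rightarrow> bool" where
  "tracks Gs f \<zeta> tr a q \<longleftrightarrow>
     ptree_ok P Gs (tr q) \<and> subst_atom \<zeta> a = ptree_atom Gs (tr q) \<and>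
     (\<forall>p\<in>stack_leaves stack (tr q). f p < q)"

text \<open>\<open>Gs\<close> is the current goal of the given derivation, \<open>Us\<close> its used variables and \<open>Vs\<close> all
  variables it will ever use; \<open>Gb\<close> is the current goal of the simulating derivation, which has
  used in addition the variables \<open>Fb\<close>. \<open>Gb\<close> consists of a copy of \<open>Gs\<close>, with priorities moved
  by \<open>f\<close>, and of extra atoms \<open>E\<close>.\<close>
definition embeds :: "'v set \<Rightarrow> ('f,'v) pgoal \<Rightarrow> 'v set \<Rightarrow> ('f,'v) pgoal \<Rightarrow> 'v set \<Rightarrow>
    ('f,'v) pgoal \<Rightarrow> (rat \<Rightarrow> ('f,'v) ptree) \<Rightarrow> (rat \<Rightarrow> rat) \<Rightarrow> ('f,'v) subst \<Rightarrow> bool" where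
  "embeds Vs Gs Us Gb Fb E tr f \<zeta> \<longleftrightarrow>
     pgoal Gs \<and> pgoal Gb \<and> pgoal_vars Gs \<subseteq> Us \<and> Us \<subseteq> Vs \<and> finite Vs \<and>
     Fb \<inter> Vs = {} \<and> finite Fb \<and> pgoal_vars Gb \<subseteq> Us \<union> Fb \<and>
     strict_mono_on (prios Gs) f \<and> Gb = shift f Gs \<union> E \<and> f ` prios Gs \<inter> prios E = {} \<and>
     (\<forall>(a,q)\<in>E. tracks Gs f \<zeta> tr a q) \<and> (\<forall>x\<in>Vs. \<zeta> x = Var x)"

lemma embedsD:
  assumes "embeds Vs Gs Us Gb Fb E tr f \<zeta>"
  shows "pgoal Gs" "pgoal Gb" "pgoal_vars Gs \<subseteq> Us" "Us \<subseteq> Vs" "finite Vs"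
    "Fb \<inter> Vs = {}" "finite Fb" "pgoal_vars Gb \<subseteq> Us \<union> Fb"
    "strict_mono_on (prios Gs) f" "Gb = shift f Gs \<union> E" "f ` prios Gs \<inter> prios E = {}"
    "\<And>a q. (a,q) \<in> E \<Longrightarrow> tracks Gs f \<zeta> tr a q" "\<And>x. x \<in> Vs \<Longrightarrow> \<zeta> x = Var x"
  using assms unfolding embeds_def by auto

lemma embeds_duplicate:
  assumes "pgoal G" "B \<subseteq> G" "shifting \<pi>" "\<forall>p\<in>prios B. p < \<pi> p"
    "prios G \<inter> prios (shift \<pi> B) = {}" "finite Vs" "pgoal_vars G \<subseteq> Vs"
  shows "embeds Vs G (pgoal_vars G) (G \<union> shift \<pi> B) {} (shift \<pi> B) (\<lambda>q. Leaf (inv \<pi> q)) id Var"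
proof -
  have "pgoal (shift \<pi> B)"
    using assms(1-3) pgoal_subset shifting_inj by (metis inj_on_subset pgoal_shift subset_UNIV)
  then have "pgoal (G \<union> shift \<pi> B)" by (rule pgoal_Un[OF assms(1) _ assms(5)])
  moreover have "tracks G id Var (\<lambda>q. Leaf (inv \<pi> q)) a q" if "(a,q) \<in> shift \<pi> B" for a q
  proof -
    from that obtain p where p: "(a,p) \<in> B" "q = \<pi> p" by (auto simp: mem_shift)
    then have "inv \<pi> q = p" using shifting_inj[OF assms(3)] by (simp add: inv_f_f)
    with p assms(1,2,4) show ?thesis
      by (auto simp: tracks_def ptree_atom_Leaf intro: prios_mem)
  qed
  moreover have "pgoal_vars B \<subseteq> pgoal_vars G" using assms(2) by (auto simp: pgoal_vars_def)
  ultimately show ?thesis using assms by (auto simp: embeds_def strict_mono_on_id)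
qed

lemma first_extra_resolved:
  assumes emb: "embeds Vs Gs Us Gb Fb E tr f \<zeta>" and "(e,q) \<in> E" and first: "\<forall>q'\<in>prios Gb. q \<le> q'"
  shows "stack_leaves stack (tr q) = {}"
proof -
  note emb = embedsD[OF emb]
  have tr: "tracks Gs f \<zeta> tr e q" using emb(12) assms(2) .
  show ?thesis
  proof (rule equals0I)
    fix p assume p: "p \<in> stack_leaves stack (tr q)"
    with tr have "p \<in> prios Gs" "f p < q"
      using stack_leaves_subset by (auto simp: tracks_def)
    moreover from \<open>p \<in> prios Gs\<close> have "f p \<in> prios Gb" using emb(10) by simp
    ultimately show False using first by fastforce
  qed
qed


lemma embeds_remove_extra:
  assumes emb: "embeds Vs Gs Us Gb Fb E tr f \<zeta>" and eq: "(e,q) \<in> E"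
  shows "Gb - {(e,q)} = shift f Gs \<union> (E - {(e,q)})" "prios (Gb - {(e,q)}) = prios Gb - {q}"
proof -
  note emb = embedsD[OF emb]
  have "q \<notin> f ` prios Gs" using eq emb(11) by (auto intro: prios_mem)
  then have "(e,q) \<notin> shift f Gs" by (auto simp: mem_shift intro: prios_mem)
  then show "Gb - {(e,q)} = shift f Gs \<union> (E - {(e,q)})" using emb(10) by auto
  show "prios (Gb - {(e,q)}) = prios Gb - {q}" using emb(2,10) eq by (intro prios_Diff_single) auto
qed

lemma replay_step_exists:
  assumes emb: "embeds Vs Gs Us Gb Fb E tr f \<zeta>" and eq: "(e,q) \<in> E"
    and first: "\<forall>q'\<in>prios Gb. q \<le> q'"
    and hB: "(h,B) \<in> P" and e: "subst_atom \<zeta> e = subst_atom \<phi> h"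
  obtains \<xi> \<tau> \<mu> \<gamma> where
    "admissible_step SQ P (Us \<union> Fb) Gb (Gb, (h,B), \<xi>, \<mu>,
       psubst \<mu> (shift \<gamma> (psubst \<xi> (stack (h,B))) \<union> (Gb - {(e,q)}) \<union> shift \<gamma> (psubst \<xi> (queue (h,B)))))"
    "clause_vars (rename_clause \<xi> (h,B)) \<inter> (Vs \<union> Fb) = {}"
    "shifting \<gamma>" "pcat_ok [shift \<gamma> (psubst \<xi> (stack (h,B))), Gb - {(e,q)}, shift \<gamma> (psubst \<xi> (queue (h,B)))]"
    "\<And>x. x \<in> Vs \<union> Fb \<Longrightarrow> \<tau> x = \<zeta> x"
    "\<And>a. vars_atom a \<subseteq> clause_vars (h,B) \<Longrightarrow> subst_atom \<tau> (subst_atom \<xi> a) = subst_atom \<phi> a"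
    "\<And>x. x \<in> Vs \<Longrightarrow> \<mu> x = Var x" "subst_comp \<mu> \<tau> = \<tau>"
proof -
  note emb = embedsD[OF emb]
  have "finite (Vs \<union> Fb)" using emb(5,7) by simp
  moreover have "is_clause (h,B)" using hB clause_in_program by blast
  ultimately obtain \<xi> \<tau> :: "('f,'v) subst" where \<xi>: "renaming \<xi>" "clause_vars (rename_clause \<xi> (h,B)) \<inter> (Vs \<union> Fb) = {}"
    and \<tau>: "\<And>x. x \<in> Vs \<union> Fb \<Longrightarrow> \<tau> x = \<zeta> x"
      "\<And>a. vars_atom a \<subseteq> clause_vars (h,B) \<Longrightarrow> subst_atom \<tau> (subst_atom \<xi> a) = subst_atom \<phi> a"
    by (rule fresh_variant[OF infinite_vars, where \<zeta>=\<zeta> and \<phi>=\<phi>]) blast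
  have eGb: "(e,q) \<in> Gb" using emb(10) eq by simp
  then have "vars_atom e \<subseteq> Vs \<union> Fb" using vars_atom_subset_pgoal_vars emb(4,8) by blast
  then have "subst_atom \<tau> e = subst_atom \<zeta> e" using \<tau>(1) by (intro subst_atom_cong) auto
  also have "\<dots> = subst_atom \<tau> (subst_atom \<xi> h)" using e \<tau>(2) by (simp add: clause_vars_def)
  finally have unif: "subst_atom \<tau> e = subst_atom \<tau> (subst_atom \<xi> h)" .
  have "\<forall>x\<in>Vs. \<tau> x = Var x" using \<tau>(1) emb(13) by simp
  with unif obtain \<mu> where \<mu>: "idem_relevant_mgu \<mu> e (subst_atom \<xi> h)" "\<forall>x\<in>Vs. \<mu> x = Var x"
    "\<And>\<tau>'. subst_atom \<tau>' e = subst_atom \<tau>' (subst_atom \<xi> h) \<Longrightarrow> subst_comp \<mu> \<tau>' = \<tau>'"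
    by (rule idem_relevant_mgu_fixing) blast
  define K where "K = Gb - {(e,q)}"
  have K: "Gb = insert (e,q) K" "(e,q) \<notin> K" using eGb by (auto simp: K_def)
  have "prios K = prios Gb - {q}" unfolding K_def using assms(1,2) by (rule embeds_remove_extra)
  with first have K_first: "\<forall>q'\<in>prios K. q < q'" by fastforce
  have disj: "pgoal_vars Gb \<inter> clause_vars (rename_clause \<xi> (h,B)) = {}"
    using emb(4,8) \<xi>(2) by blast
  obtain \<gamma> where \<gamma>: "shifting \<gamma>"
    "pcat_ok [shift \<gamma> (psubst \<xi> (stack (h,B))), K, shift \<gamma> (psubst \<xi> (queue (h,B)))]"
    "(Gb, (h,B), \<xi>, \<mu>,
      psubst \<mu> (shift \<gamma> (psubst \<xi> (stack (h,B))) \<union> K \<union> shift \<gamma> (psubst \<xi> (queue (h,B))))) \<in> SQ"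
    using SQ_step_exists[OF emb(2) K K_first hB \<xi>(1) disj \<mu>(1)] by blast
  define R where
    "R = psubst \<mu> (shift \<gamma> (psubst \<xi> (stack (h,B))) \<union> K \<union> shift \<gamma> (psubst \<xi> (queue (h,B))))"
  have "is_step (Gb, (h,B), \<xi>, \<mu>, R)" using \<gamma>(3) complete by (auto simp: complete_steps_def R_def)
  moreover have "clause_vars (rename_clause \<xi> (h,B)) \<inter> (Us \<union> Fb) = {}" using \<xi>(2) emb(4) by blast
  ultimately have "admissible_step SQ P (Us \<union> Fb) Gb (Gb, (h,B), \<xi>, \<mu>, R)"
    using \<gamma>(3) hB unfolding admissible_step_def step_goal_def step_clause_def step_vars_def step_ren_def R_def
    by simp
  moreover have "\<And>x. x \<in> Vs \<Longrightarrow> \<mu> x = Var x" using \<mu>(2) by blast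
  ultimately show ?thesis
    using that[OF _ \<xi>(2) \<gamma>(1) _ \<tau>] \<gamma>(2) \<mu>(3)[OF unif] unfolding R_def K_def by blast
qed


lemma tracks_adopted_child:
  assumes tr: "tracks Gs f \<zeta> tr e q" and trq: "tr q = Node (h,B) \<phi> ch"
    and no_stack: "stack_leaves stack (tr q) = {}"
    and "(ab,pb) \<in> B" "pgoal B" "inj \<gamma>" "subst_atom \<tau> a = subst_atom \<phi> ab"
    and queue: "(ab,pb) \<notin> stack (h,B) \<Longrightarrow> \<forall>p\<in>prios Gs. f p < \<gamma> pb"
  shows "tracks Gs f \<tau> (adopt_children \<gamma> B ch tr) a (\<gamma> pb)"
proof -
  from tr trq \<open>(ab,pb) \<in> B\<close> have ok: "ptree_ok P Gs (ch (ab,pb))"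
    and atom: "ptree_atom Gs (ch (ab,pb)) = subst_atom \<phi> ab"
    by (auto simp: tracks_def)
  have "f p < \<gamma> pb" if "p \<in> stack_leaves stack (ch (ab,pb))" for p
  proof (cases "(ab,pb) \<in> stack (h,B)")
    case True
    with that trq no_stack show ?thesis by auto
  next
    case False
    with that queue stack_leaves_subset[OF ok] show ?thesis by auto
  qed
  moreover have "adopt_children \<gamma> B ch tr (\<gamma> pb) = ch (ab,pb)"
    using adopt_children_child[OF assms(5,6,4)] by simp
  ultimately show ?thesis using ok atom assms(7) by (simp add: tracks_def)
qed

lemma tracks_replayed:
  assumes emb: "embeds Vs Gs Us Gb Fb E tr f \<zeta>" and eq: "(e,q) \<in> E"
    and trq: "tr q = Node (h,B) \<phi> ch" and no_stack: "stack_leaves stack (tr q) = {}"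
    and hB: "(h,B) \<in> P" and "inj \<gamma>"
    and K_B: "prios (Gb - {(e,q)}) \<inter> \<gamma> ` prios B = {}"
    and K_queue: "\<forall>p\<in>prios (Gb - {(e,q)}). \<forall>x\<in>\<gamma> ` prios (queue (h,B)). p < x"
    and \<tau>: "\<And>x. x \<in> Vs \<union> Fb \<Longrightarrow> \<tau> x = \<zeta> x"
      "\<And>a. vars_atom a \<subseteq> clause_vars (h,B) \<Longrightarrow> subst_atom \<tau> (subst_atom \<xi> a) = subst_atom \<phi> a"
    and \<mu>: "subst_comp \<mu> \<tau> = \<tau>"
    and ax: "(a,x) \<in> psubst \<mu> (E - {(e,q)}) \<union> psubst \<mu> (shift \<gamma> (psubst \<xi> B))"
  shows "tracks Gs f \<tau> (adopt_children \<gamma> B ch tr) a x"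
proof -
  note emb' = embedsD[OF emb]
  have K_eq: "Gb - {(e,q)} = shift f Gs \<union> (E - {(e,q)})" using emb eq by (rule embeds_remove_extra)
  have pB: "pgoal B" using hB clause_in_program by (auto simp: is_clause_def)
  show ?thesis
  proof (cases "(a,x) \<in> psubst \<mu> (E - {(e,q)})")
    case True
    then obtain a0 where a0: "(a0,x) \<in> E - {(e,q)}" "a = subst_atom \<mu> a0" by (auto simp: mem_psubst)
    then have "(a0,x) \<in> Gb" "x \<in> prios (Gb - {(e,q)})" using emb'(10) by (auto intro: prios_mem)
    then have "vars_atom a0 \<subseteq> Vs \<union> Fb" using vars_atom_subset_pgoal_vars emb'(4,8) by blast
    then have "subst_atom \<tau> a0 = subst_atom \<zeta> a0" using \<tau>(1) by (intro subst_atom_cong) auto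
    moreover have "subst_atom \<tau> a = subst_atom \<tau> a0"
      using a0(2) subst_atom_comp[of \<mu> \<tau> a0] \<mu> by simp
    moreover have "adopt_children \<gamma> B ch tr x = tr x"
      using \<open>x \<in> prios (Gb - {(e,q)})\<close> K_B by (intro adopt_children_other) blast
    ultimately show ?thesis using emb'(12)[of a0 x] a0(1) by (simp add: tracks_def)
  next
    case False
    with ax obtain ab pb where b: "(ab,pb) \<in> B" "a = subst_atom \<mu> (subst_atom \<xi> ab)" "x = \<gamma> pb"
      by (auto simp: mem_psubst mem_shift)
    have "vars_atom ab \<subseteq> clause_vars (h,B)" using b(1) by (force simp: clause_vars_def pgoal_vars_def)
    then have "subst_atom \<tau> a = subst_atom \<phi> ab"
      using b(2) subst_atom_comp[of \<mu> \<tau> "subst_atom \<xi> ab"] \<mu> \<tau>(2) by simp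
    moreover have "\<forall>p\<in>prios Gs. f p < \<gamma> pb" if "(ab,pb) \<notin> stack (h,B)"
    proof
      fix p assume "p \<in> prios Gs"
      then have "f p \<in> prios (Gb - {(e,q)})" using K_eq by simp
      moreover have "(ab,pb) \<in> queue (h,B)"
        using that b(1) split_body[OF clause_in_program[OF hB]] by blast
      then have "\<gamma> pb \<in> \<gamma> ` prios (queue (h,B))" by (auto intro: prios_mem)
      ultimately show "f p < \<gamma> pb" using K_queue by blast
    qed
    ultimately have "tracks Gs f \<tau> (adopt_children \<gamma> B ch tr) a (\<gamma> pb)"
      by (rule tracks_adopted_child[OF emb'(12)[OF eq] trq no_stack b(1) pB \<open>inj \<gamma>\<close>])
    with b(3) show ?thesis by simp
  qed
qed

lemma replay_step:
  assumes emb: "embeds Vs Gs Us Gb Fb E tr f \<zeta>" and eq: "(e,q) \<in> E"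
    and first: "\<forall>q'\<in>prios Gb. q \<le> q'"
  obtains s E' tr' \<zeta>' where "admissible_step SQ P (Us \<union> Fb) Gb s"
    "embeds Vs Gs Us (step_res s) (Fb \<union> step_vars s) E' tr' f \<zeta>'"
    "extra_weight E' tr' < extra_weight E tr"
proof -
  note emb' = embedsD[OF emb]
  have tr_q: "tracks Gs f \<zeta> tr e q" using emb'(12) eq .
  have no_stack: "stack_leaves stack (tr q) = {}" by (rule first_extra_resolved[OF emb eq first])
  then obtain h B \<phi> ch where trq: "tr q = Node (h,B) \<phi> ch" by (cases "tr q") auto
  with tr_q have hB: "(h,B) \<in> P" and e: "subst_atom \<zeta> e = subst_atom \<phi> h"
    by (auto simp: tracks_def)
  obtain \<xi> \<tau> \<mu> \<gamma> where step: "admissible_step SQ P (Us \<union> Fb) Gb (Gb, (h,B), \<xi>, \<mu>,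
       psubst \<mu> (shift \<gamma> (psubst \<xi> (stack (h,B))) \<union> (Gb - {(e,q)}) \<union> shift \<gamma> (psubst \<xi> (queue (h,B)))))"
    and CV: "clause_vars (rename_clause \<xi> (h,B)) \<inter> (Vs \<union> Fb) = {}"
    and \<gamma>: "shifting \<gamma>" "pcat_ok [shift \<gamma> (psubst \<xi> (stack (h,B))), Gb - {(e,q)}, shift \<gamma> (psubst \<xi> (queue (h,B)))]"
    and \<tau>: "\<And>x. x \<in> Vs \<union> Fb \<Longrightarrow> \<tau> x = \<zeta> x"
      "\<And>a. vars_atom a \<subseteq> clause_vars (h,B) \<Longrightarrow> subst_atom \<tau> (subst_atom \<xi> a) = subst_atom \<phi> a"
    and \<mu>: "\<And>x. x \<in> Vs \<Longrightarrow> \<mu> x = Var x" "subst_comp \<mu> \<tau> = \<tau>"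
    by (rule replay_step_exists[OF emb eq first hB e]) blast
  define K where "K = Gb - {(e,q)}"
  define Ms where "Ms = stack (h,B)"
  define Mq where "Mq = queue (h,B)"
  define s where "s = (Gb, (h,B), \<xi>, \<mu>, psubst \<mu> (shift \<gamma> (psubst \<xi> Ms) \<union> K \<union> shift \<gamma> (psubst \<xi> Mq)))"
  define E' where "E' = psubst \<mu> (E - {(e,q)}) \<union> psubst \<mu> (shift \<gamma> (psubst \<xi> B))"
  have cl: "is_clause (h,B)" and pB: "pgoal B" using hB clause_in_program by (auto simp: is_clause_def)
  have B: "B = Ms \<union> Mq" using split_body[OF cl] by (simp add: Ms_def Mq_def)
  have inj: "inj \<gamma>" using shifting_inj[OF \<gamma>(1)] .
  have order: "\<forall>p\<in>\<gamma> ` prios Ms. \<forall>x\<in>prios K. p < x" "\<forall>p\<in>prios K. \<forall>x\<in>\<gamma> ` prios Mq. p < x"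
    using \<gamma>(2) by (auto simp: pcat_ok_def prio_less_def K_def Ms_def Mq_def)
  then have K_B: "prios K \<inter> \<gamma> ` prios B = {}" using B by fastforce
  have q: "q \<in> prios E" using eq by (rule prios_mem)
  have K_eq: "K = shift f Gs \<union> (E - {(e,q)})" unfolding K_def using emb eq by (rule embeds_remove_extra)
  have pE: "pgoal E" using emb'(2,10) pgoal_subset by blast
  have "psubst \<mu> (shift f Gs) = shift f Gs" using emb'(3,4) \<mu>(1) by (intro psubst_id_on) auto
  then have res: "step_res s = shift f Gs \<union> E'"
    using B K_eq by (auto simp: s_def step_res_def E'_def)
  have prE': "prios E' = (prios E - {q}) \<union> \<gamma> ` prios B"
    using prios_Diff_single[OF pE eq] by (simp add: E'_def)
  have tracks: "tracks Gs f \<tau> (adopt_children \<gamma> B ch tr) a x" if "(a,x) \<in> E'" for a x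
    using tracks_replayed[OF emb eq trq no_stack hB inj K_B[unfolded K_def]
        order(2)[unfolded K_def Mq_def] \<tau> \<mu>(2)] that
    by (simp add: E'_def)
  have "embeds Vs Gs Us (step_res s) (Fb \<union> step_vars s) E' (adopt_children \<gamma> B ch tr) f \<tau>"
    unfolding embeds_def
  proof (intro conjI ballI)
    have "is_step s" using step by (simp add: admissible_step_def s_def K_def Ms_def Mq_def)
    then show "pgoal (step_res s)" "pgoal_vars (step_res s) \<subseteq> Us \<union> (Fb \<union> step_vars s)"
      using step_res_pgoal step_res_vars emb'(8)
      by (fastforce simp: s_def step_res_def step_vars_def step_ren_def step_clause_def)+
    show "(Fb \<union> step_vars s) \<inter> Vs = {}" "finite (Fb \<union> step_vars s)"
      using emb'(6,7) CV finite_clause_vars_rename[OF cl]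
      by (auto simp: s_def step_vars_def step_ren_def step_clause_def)
    show "step_res s = shift f Gs \<union> E'" by (rule res)
    have "f ` prios Gs \<subseteq> prios K" using K_eq by auto
    then show "f ` prios Gs \<inter> prios E' = {}" using prE' emb'(11) K_B by blast
  qed (use emb' tracks \<tau>(1) in auto)
  moreover have "prios E - {q} \<subseteq> prios K"
    using embeds_remove_extra(2)[OF emb eq] emb'(10) by (auto simp: K_def)
  with K_B have "(prios E - {q}) \<inter> \<gamma> ` prios B = {}" by blast
  then have "extra_weight E' (adopt_children \<gamma> B ch tr) < extra_weight E tr"
    by (rule extra_weight_adopt_children[where tr=tr, OF pE q(1) trq pB inj _ prE'])
  ultimately show ?thesis
    using that step by (simp add: s_def K_def Ms_def Mq_def)
qed

text \<open>The stack leaves of the new tree are old leaves, whose priorities do not move, and stack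
  children of the resolved atom, which \<open>f'\<close> must place before \<open>q\<close>.\<close>
lemma tracks_resolve:
  assumes tr: "tracks Gs f \<zeta> tr a q"
    and Gs: "pgoal Gs" "Gs = insert (a0,p0) K" "(a0,p0) \<notin> K"
    and Rs: "pgoal Rs" "psubst \<theta> K \<subseteq> Rs" "psubst \<theta> (shift \<gamma> (psubst \<xi> B)) \<subseteq> Rs"
    and hB: "(h,B) \<in> P" and unif: "subst_atom \<theta> a0 = subst_atom \<theta> (subst_atom \<xi> h)"
    and Vs: "subst_vars \<theta> \<subseteq> Vs" "\<forall>x\<in>Vs. \<zeta> x = Var x"
    and f': "\<forall>p\<in>prios K. f' p = f p" "\<forall>p\<in>prios (stack (h,B)). f' (\<gamma> p) < q"
  shows "tracks Rs f' (\<lambda>x. if x \<in> Vs then Var x else subst_trm \<theta> (\<zeta> x))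
    (\<lambda>q. ptree_resolve p0 (h,B) \<xi> \<theta> \<gamma> (tr q)) (subst_atom \<theta> a) q"
proof -
  have ok: "ptree_ok P Gs (tr q)" and atom: "subst_atom \<zeta> a = ptree_atom Gs (tr q)"
    and leaves: "\<forall>p\<in>stack_leaves stack (tr q). f p < q"
    using tr by (auto simp: tracks_def)
  have "ptree_ok P Rs (ptree_resolve p0 (h,B) \<xi> \<theta> \<gamma> (tr q))"
    using ptree_ok_resolve[OF Gs Rs(1,2) unif Rs(3) hB ok] .
  moreover have "subst_atom (\<lambda>x. if x \<in> Vs then Var x else subst_trm \<theta> (\<zeta> x)) (subst_atom \<theta> a) =
      ptree_atom Rs (ptree_resolve p0 (h,B) \<xi> \<theta> \<gamma> (tr q))"
    using subst_atom_commute_fixing[OF Vs] atom ptree_atom_resolve[OF Gs Rs(1,2) unif ok] by simp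
  moreover have "f' p < q" if "p \<in> stack_leaves stack (ptree_resolve p0 (h,B) \<xi> \<theta> \<gamma> (tr q))" for p
  proof -
    from that stack_leaves_resolve
    have "p \<in> stack_leaves stack (tr q) - {p0} \<or> p \<in> \<gamma> ` prios (stack (h,B))" by blast
    then show ?thesis
    proof
      assume p: "p \<in> stack_leaves stack (tr q) - {p0}"
      then have "p \<in> prios K" using stack_leaves_subset[OF ok] Gs(2) by auto
      with p leaves f'(1) show ?thesis by auto
    qed (use f'(2) in auto)
  qed
  ultimately show ?thesis by (simp add: tracks_def)
qed

lemma mirror_step_exists:
  assumes emb: "embeds Vs Gs Us Gb Fb E tr f \<zeta>"
    and s: "admissible_step SQ P Us Gs (Gs, (h,B), \<xi>, \<theta>, Rs)"
    and CV: "clause_vars (rename_clause \<xi> (h,B)) \<subseteq> Vs"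
    and Gs: "Gs = insert (a,p0) K" "(a,p0) \<notin> K" "\<forall>q\<in>prios K. p0 < q"
    and behind: "\<forall>x\<in>prios E. \<exists>y\<in>prios Gs. f y < x"
  obtains \<gamma> where "shifting \<gamma>"
    "pcat_ok [shift \<gamma> (psubst \<xi> (stack (h,B))), shift f K \<union> E, shift \<gamma> (psubst \<xi> (queue (h,B)))]"
    "admissible_step SQ P (Us \<union> Fb) Gb (Gb, (h,B), \<xi>, \<theta>,
       psubst \<theta> (shift \<gamma> (psubst \<xi> (stack (h,B))) \<union> (shift f K \<union> E) \<union> shift \<gamma> (psubst \<xi> (queue (h,B)))))"
proof -
  note emb' = embedsD[OF emb]
  have hB: "(h,B) \<in> P" and CV_Us: "clause_vars (rename_clause \<xi> (h,B)) \<inter> Us = {}"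
    and sst: "is_step (Gs, (h,B), \<xi>, \<theta>, Rs)"
    using s by (auto simp: admissible_step_def step_clause_def step_vars_def step_ren_def)
  from sst obtain a' p' K' where "Gs = insert (a',p') K'" "(a',p') \<notin> K'" "\<forall>q\<in>prios K'. p' < q"
    and ren: "renaming \<xi>" and mgu: "idem_relevant_mgu \<theta> a' (subst_atom \<xi> h)"
    by (rule is_stepE) blast
  with front_unique[OF emb'(1) Gs] have mgu: "idem_relevant_mgu \<theta> a (subst_atom \<xi> h)" by auto
  define Kb where "Kb = shift f K \<union> E"
  have Gb: "Gb = insert (a, f p0) Kb" using emb'(10) Gs(1) by (simp add: Kb_def shift_insert)
  have fmono: "f x < f y" if "x \<in> prios Gs" "y \<in> prios Gs" "x < y" for x y
    using emb'(9) that by (simp add: strict_mono_on_def)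
  have Kb_first: "\<forall>q\<in>prios Kb. f p0 < q"
  proof
    fix q assume "q \<in> prios Kb"
    then consider "q \<in> f ` prios K" | "q \<in> prios E" by (auto simp: Kb_def)
    then show "f p0 < q"
    proof cases
      case 1
      then show ?thesis using Gs fmono by auto
    next
      case 2
      then obtain y where y: "y \<in> prios Gs" "f y < q" using behind by blast
      have "f p0 \<le> f y" using Gs y(1) fmono by (cases "y = p0") (auto intro: less_imp_le)
      with y show ?thesis by simp
    qed
  qed
  have "(a, f p0) \<notin> Kb" using Kb_first prios_mem by blast
  moreover have "pgoal_vars Gb \<inter> clause_vars (rename_clause \<xi> (h,B)) = {}"
    using emb'(6,8) CV_Us CV by blast
  ultimately obtain \<gamma> where \<gamma>: "shifting \<gamma>"
    "pcat_ok [shift \<gamma> (psubst \<xi> (stack (h,B))), Kb, shift \<gamma> (psubst \<xi> (queue (h,B)))]"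
    "(Gb, (h,B), \<xi>, \<theta>, psubst \<theta> (shift \<gamma> (psubst \<xi> (stack (h,B))) \<union> Kb \<union> shift \<gamma> (psubst \<xi> (queue (h,B))))) \<in> SQ"
    using SQ_step_exists[OF emb'(2) Gb _ Kb_first hB ren _ mgu] by blast
  moreover from \<gamma>(3) have "is_step (Gb, (h,B), \<xi>, \<theta>,
      psubst \<theta> (shift \<gamma> (psubst \<xi> (stack (h,B))) \<union> Kb \<union> shift \<gamma> (psubst \<xi> (queue (h,B)))))"
    using complete by (auto simp: complete_steps_def)
  moreover have "clause_vars (rename_clause \<xi> (h,B)) \<inter> (Us \<union> Fb) = {}" using CV_Us CV emb'(6) by blast
  ultimately show ?thesis using that hB
    by (auto simp: admissible_step_def step_goal_def step_clause_def step_vars_def step_ren_def Kb_def)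
qed

lemma mirror_step:
  assumes emb: "embeds Vs Gs Us Gb Fb E tr f \<zeta>"
    and s: "admissible_step SQ P Us Gs s" and sV: "step_vars s \<subseteq> Vs"
    and behind: "\<forall>x\<in>prios E. \<exists>y\<in>prios Gs. f y < x"
  obtains s' E' tr' f' \<zeta>' where "admissible_step SQ P (Us \<union> Fb) Gb s'"
    "step_clause s' = step_clause s" "step_vars s' = step_vars s"
    "embeds Vs (step_res s) (Us \<union> step_vars s) (step_res s') Fb E' tr' f' \<zeta>'"
proof -
  note emb' = embedsD[OF emb]
  obtain h B \<xi> \<theta> Rs where s_eq: "s = (Gs, (h,B), \<xi>, \<theta>, Rs)"
    using s by (cases s) (auto simp: admissible_step_def step_goal_def)
  define CV where "CV = clause_vars (rename_clause \<xi> (h,B))"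
  have CV: "step_vars s = CV" by (simp add: s_eq CV_def step_vars_def step_ren_def step_clause_def)
  have sSQ: "(Gs, (h,B), \<xi>, \<theta>, Rs) \<in> SQ" and hB: "(h,B) \<in> P"
    and sst: "is_step (Gs, (h,B), \<xi>, \<theta>, Rs)"
    using s by (auto simp: s_eq admissible_step_def step_clause_def)
  from sst obtain a p0 K where Gs: "pgoal Gs" "Gs = insert (a,p0) K" "(a,p0) \<notin> K" "\<forall>q\<in>prios K. p0 < q"
    and mgu: "idem_relevant_mgu \<theta> a (subst_atom \<xi> h)"
    by (rule is_stepE) blast
  define Ms where "Ms = stack (h,B)"
  define Mq where "Mq = queue (h,B)"
  have B: "B = Ms \<union> Mq" using split_body[OF clause_in_program[OF hB]] by (simp add: Ms_def Mq_def)
  obtain \<gamma>s where \<gamma>s: "shifting \<gamma>s" "pcat_ok [shift \<gamma>s (psubst \<xi> Ms), K, shift \<gamma>s (psubst \<xi> Mq)]"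
    "Rs = psubst \<theta> (shift \<gamma>s (psubst \<xi> Ms) \<union> K \<union> shift \<gamma>s (psubst \<xi> Mq))"
    using SQ_resultE[OF sSQ Gs] unfolding Ms_def Mq_def by blast
  obtain \<gamma>b where \<gamma>b: "shifting \<gamma>b" "pcat_ok [shift \<gamma>b (psubst \<xi> Ms), shift f K \<union> E, shift \<gamma>b (psubst \<xi> Mq)]"
    and s': "admissible_step SQ P (Us \<union> Fb) Gb (Gb, (h,B), \<xi>, \<theta>,
       psubst \<theta> (shift \<gamma>b (psubst \<xi> Ms) \<union> (shift f K \<union> E) \<union> shift \<gamma>b (psubst \<xi> Mq)))"
    using mirror_step_exists[OF emb s[unfolded s_eq] _ Gs(2-4) behind] sV CV
    unfolding Ms_def Mq_def CV_def by blast
  define Rb where "Rb = psubst \<theta> (shift \<gamma>b (psubst \<xi> Ms) \<union> (shift f K \<union> E) \<union> shift \<gamma>b (psubst \<xi> Mq))"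
  have "strict_mono_on (prios K) f" using Gs(2) by (intro monotone_on_subset[OF emb'(9)]) auto
  then obtain f' where f': "strict_mono_on (prios (K \<union> shift \<gamma>s (psubst \<xi> B))) f'"
    "shift f' (K \<union> shift \<gamma>s (psubst \<xi> B)) = shift f K \<union> shift \<gamma>b (psubst \<xi> B)"
    "\<forall>p\<in>prios K. f' p = f p" "\<forall>p\<in>prios Ms \<union> prios Mq. f' (\<gamma>s p) = \<gamma>b p"
    using shift_merge[OF _ \<gamma>s(1,2) \<gamma>b(1,2)] B by auto
  have Rs: "Rs = psubst \<theta> (K \<union> shift \<gamma>s (psubst \<xi> B))" using \<gamma>s(3) B by auto
  then have "shift f' Rs = psubst \<theta> (shift f K \<union> shift \<gamma>b (psubst \<xi> B))"
    using f'(2) by (simp only: shift_psubst)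
  then have Rb: "Rb = shift f' Rs \<union> psubst \<theta> E" by (simp add: Rb_def B Un_ac)
  have prRs: "prios Rs = \<gamma>s ` (prios Ms \<union> prios Mq) \<union> prios K" using Rs B by auto
  have ordb: "\<forall>p\<in>\<gamma>b ` prios Ms. \<forall>q\<in>prios E. p < q" "\<forall>p\<in>prios E. \<forall>q\<in>\<gamma>b ` prios Mq. p < q"
    using \<gamma>b(2) by (auto simp: pcat_ok_def prio_less_def)
  have "f' ` prios Rs \<subseteq> f ` prios Gs \<union> \<gamma>b ` (prios Ms \<union> prios Mq)" using prRs f' Gs(2) by auto
  moreover have "\<gamma>b ` (prios Ms \<union> prios Mq) \<inter> prios E = {}" using ordb by fastforce
  ultimately have disj: "f' ` prios Rs \<inter> prios (psubst \<theta> E) = {}" using emb'(11) by simp blast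
  have svV: "subst_vars \<theta> \<subseteq> Vs" using step_mgu_vars[OF sst] emb'(3,4) CV sV unfolding CV_def by blast
  have unif: "subst_atom \<theta> a = subst_atom \<theta> (subst_atom \<xi> h)"
    using mgu by (simp add: idem_relevant_mgu_def is_mgu_def)
  have "pgoal Rs" using step_res_pgoal[OF sst] .
  have tracks: "tracks Rs f' (\<lambda>x. if x \<in> Vs then Var x else subst_trm \<theta> (\<zeta> x))
      (\<lambda>q. ptree_resolve p0 (h,B) \<xi> \<theta> \<gamma>s (tr q)) a2 q2" if "(a2,q2) \<in> psubst \<theta> E" for a2 q2
  proof -
    from that obtain a3 where a3: "(a3,q2) \<in> E" "a2 = subst_atom \<theta> a3" by (auto simp: mem_psubst)
    then have "\<forall>p\<in>prios Ms. f' (\<gamma>s p) < q2" using ordb(1) f'(4) by (auto intro: prios_mem)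
    with a3 show ?thesis using tracks_resolve[OF emb'(12)[OF a3(1)] Gs(1-3) \<open>pgoal Rs\<close> _ _ hB unif svV]
      emb'(13) f'(3) Rs by (auto simp: Ms_def)
  qed
  have "is_step (Gb, (h,B), \<xi>, \<theta>, Rb)" using s' by (simp add: admissible_step_def Rb_def)
  then have "embeds Vs Rs (Us \<union> CV) Rb Fb (psubst \<theta> E)
      (\<lambda>q. ptree_resolve p0 (h,B) \<xi> \<theta> \<gamma>s (tr q)) f' (\<lambda>x. if x \<in> Vs then Var x else subst_trm \<theta> (\<zeta> x))"
    unfolding embeds_def
  proof (intro conjI ballI)
    show "pgoal Rb" using step_res_pgoal \<open>is_step (Gb, (h,B), \<xi>, \<theta>, Rb)\<close> .
    show "pgoal_vars Rs \<subseteq> Us \<union> CV" using step_res_vars[OF sst] emb'(3) by (auto simp: CV_def)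
    show "pgoal_vars Rb \<subseteq> Us \<union> CV \<union> Fb"
      using step_res_vars[OF \<open>is_step (Gb, (h,B), \<xi>, \<theta>, Rb)\<close>] emb'(8) by (auto simp: CV_def)
    show "strict_mono_on (prios Rs) f'" using f'(1) Rs by simp
  qed (use emb' \<open>pgoal Rs\<close> CV sV Rb disj tracks in auto)
  with s' show ?thesis
    using that[of "(Gb, (h,B), \<xi>, \<theta>, Rb)"] CV
    by (simp add: Rb_def s_eq step_clause_def step_vars_def step_ren_def step_res_def)
qed

lemma catch_up:
  assumes "embeds Vs Gs Us Gb Fb E tr f \<zeta>" "Gs \<noteq> {}"
  obtains ss Gb' E' tr' \<zeta>' where "pderiv_aux SQ P (Us \<union> Fb) Gb ss Gb'"
    "embeds Vs Gs Us Gb' (Fb \<union> derivation_vars ss) E' tr' f \<zeta>'"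
    "\<forall>x\<in>prios E'. \<exists>y\<in>prios Gs. f y < x"
  using assms(1)
proof (induction "extra_weight E tr" arbitrary: Gb Fb E tr \<zeta> thesis rule: less_induct)
  case less
  note emb = embedsD[OF less.prems(2)]
  have "prios Gb \<noteq> {}" using assms(2) emb(10) by (auto simp: prios_def shift_def)
  moreover have "finite (prios Gb)" using emb(2) by (rule finite_prios)
  ultimately have qm: "Min (prios Gb) \<in> prios Gb" "\<forall>q\<in>prios Gb. Min (prios Gb) \<le> q" by auto
  then obtain am where am: "(am, Min (prios Gb)) \<in> Gb" by (auto elim: prios_memE)
  show ?case
  proof (cases "(am, Min (prios Gb)) \<in> E")
    case True
    from replay_step[OF less.prems(2) True qm(2)] obtain s E' tr' \<zeta>'
      where s: "admissible_step SQ P (Us \<union> Fb) Gb s"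
        and emb': "embeds Vs Gs Us (step_res s) (Fb \<union> step_vars s) E' tr' f \<zeta>'"
        and less': "extra_weight E' tr' < extra_weight E tr" .
    obtain ss Gb' E'' tr'' \<zeta>'' where
      "pderiv_aux SQ P (Us \<union> (Fb \<union> step_vars s)) (step_res s) ss Gb'"
      "embeds Vs Gs Us Gb' (Fb \<union> step_vars s \<union> derivation_vars ss) E'' tr'' f \<zeta>''"
      "\<forall>x\<in>prios E''. \<exists>y\<in>prios Gs. f y < x"
      using less.hyps[OF less' _ emb'] by blast
    with s show ?thesis
      by (intro less.prems(1)[of "s # ss"])
        (auto simp: pderiv_aux_Cons_iff derivation_vars_def Un_assoc simp del: pderiv_aux.simps(2))
  next
    case False
    then have "Min (prios Gb) \<notin> prios E" using am emb(2,10) by (auto elim: prios_memE dest: pgoal_unique)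
    then obtain y where "y \<in> prios Gs" "f y = Min (prios Gb)" using qm(1) emb(10) by auto
    moreover have "x \<in> prios Gb" if "x \<in> prios E" for x using that emb(10) by simp
    ultimately have "\<forall>x\<in>prios E. \<exists>y\<in>prios Gs. f y < x"
      using qm(2) \<open>Min (prios Gb) \<notin> prios E\<close> by (metis order_le_neq_trans)
    then show ?thesis using less.prems by (intro less.prems(1)[of "[]"]) (auto simp: derivation_vars_def)
  qed
qed

lemma embedded_derivation:
  "pderiv_aux SQ P Us Gs ss Q \<Longrightarrow> embeds Vs Gs Us Gb Fb E tr f \<zeta> \<Longrightarrow> derivation_vars ss \<subseteq> Vs \<Longrightarrow>
   \<exists>ss' R. pderiv_aux SQ P (Us \<union> Fb) Gb ss' R \<and> subseq (template ss) (template ss') \<and> card Q \<le> card R"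
proof (induction ss arbitrary: Us Gs Gb Fb E tr f \<zeta>)
  case Nil
  note emb = embedsD[OF Nil.prems(2)]
  have "card Gs = card (shift f Gs)"
    using card_shift[OF emb(1) strict_mono_on_imp_inj_on[OF emb(9)]] by simp
  also have "\<dots> \<le> card Gb" using emb(2,10) by (intro card_mono) (auto simp: pgoal_def)
  finally show ?case using Nil.prems(1) by (intro exI[of _ "[]"] exI[of _ Gb]) (simp add: template_def)
next
  case (Cons s ss)
  from Cons.prems(1) have s: "admissible_step SQ P Us Gs s"
    and ss: "pderiv_aux SQ P (Us \<union> step_vars s) (step_res s) ss Q"
    by (simp_all add: pderiv_aux_Cons_iff del: pderiv_aux.simps(2))
  have sV: "step_vars s \<subseteq> Vs" "derivation_vars ss \<subseteq> Vs"
    using Cons.prems(3) by (auto simp: derivation_vars_def)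
  have "Gs \<noteq> {}" using s by (cases s) (auto simp: admissible_step_def is_step_def step_goal_def)
  with Cons.prems(2) obtain ss1 Gb1 E1 tr1 \<zeta>1 where ss1: "pderiv_aux SQ P (Us \<union> Fb) Gb ss1 Gb1"
    and emb1: "embeds Vs Gs Us Gb1 (Fb \<union> derivation_vars ss1) E1 tr1 f \<zeta>1"
    and behind: "\<forall>x\<in>prios E1. \<exists>y\<in>prios Gs. f y < x"
    by (rule catch_up)
  from mirror_step[OF emb1 s sV(1) behind] obtain s' E' tr' f' \<zeta>'
    where s': "admissible_step SQ P (Us \<union> (Fb \<union> derivation_vars ss1)) Gb1 s'"
      "step_clause s' = step_clause s" "step_vars s' = step_vars s"
      and emb': "embeds Vs (step_res s) (Us \<union> step_vars s) (step_res s') (Fb \<union> derivation_vars ss1) E' tr' f' \<zeta>'" .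
  from Cons.IH[OF ss emb' sV(2)] obtain ss' R
    where ss': "pderiv_aux SQ P (Us \<union> step_vars s \<union> (Fb \<union> derivation_vars ss1)) (step_res s') ss' R"
      "subseq (template ss) (template ss')" "card Q \<le> card R"
    by blast
  have "pderiv_aux SQ P (Us \<union> Fb \<union> derivation_vars ss1) Gb1 (s' # ss') R"
    using s' ss'(1) by (simp add: pderiv_aux_Cons_iff Un_ac del: pderiv_aux.simps(2))
  with ss1 have "pderiv_aux SQ P (Us \<union> Fb) Gb (ss1 @ s' # ss') R" by (rule pderiv_aux_append)
  moreover have "subseq (template (s # ss)) (template (ss1 @ s' # ss'))"
    using ss'(2) s'(2) by (auto simp: template_def intro: subseq_Cons2)
  ultimately show ?case using ss'(3) by blast
qed

end

theorem theoremt4p3p1: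
  fixes P :: "('f,'v) clause set" and SQ :: "('f,'v) step set"
    and A B C D Q :: "('f,'v) pgoal" and \<pi> :: "rat \<Rightarrow> rat"
    and ss :: "('f,'v) step list"
  assumes "infinite (UNIV :: 'v set)"
    and "program P"
    and "stack_queue SQ"
    and "shifting \<pi>"
    and "pcat_ok [A, B, C, D]"
    and "pcat_ok [A, B, C, shift \<pi> B, D]"
    and "pderiv SQ P (A \<union> B \<union> C \<union> D) ss Q"
  shows "\<exists>ss' R. pderiv SQ P (A \<union> B \<union> C \<union> shift \<pi> B \<union> D) ss' R \<and>
           subseq (template ss) (template ss') \<and> card Q \<le> card R"
proof -
  obtain stack queue where "stack_queue_rule P SQ stack queue"
    using stack_queue_rule_exists[OF assms(1-3)] .
  then interpret stack_queue_rule P SQ stack queue .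
  let ?G = "A \<union> B \<union> C \<union> D"
  define Vs where "Vs = pgoal_vars ?G \<union> derivation_vars ss"
  have der: "pderiv_aux SQ P (pgoal_vars ?G) ?G ss Q" using assms(7) by (simp add: pderiv_def)
  have pG: "pgoal ?G" using pgoal_Union_pcat[OF assms(5)] by (simp add: Un_assoc)
  then have "finite Vs" using finite_derivation_vars[OF der assms(2)]
    by (simp add: Vs_def pgoal_def finite_pgoal_vars)
  then have "embeds Vs ?G (pgoal_vars ?G) (?G \<union> shift \<pi> B) {} (shift \<pi> B) (\<lambda>q. Leaf (inv \<pi> q)) id Var"
    using pG assms(4) pcat_duplicate[OF assms(6)] by (intro embeds_duplicate) (auto simp: Vs_def)
  from embedded_derivation[OF der this] obtain ss' R
    where "pderiv_aux SQ P (pgoal_vars ?G \<union> {}) (?G \<union> shift \<pi> B) ss' R"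
      "subseq (template ss) (template ss')" "card Q \<le> card R"
    using Vs_def by (auto simp: derivation_vars_def)
  moreover have "?G \<union> shift \<pi> B = A \<union> B \<union> C \<union> shift \<pi> B \<union> D" by auto
  moreover have "pgoal_vars (?G \<union> shift \<pi> B) = pgoal_vars ?G" by auto
  ultimately show ?thesis unfolding pderiv_def by auto
qed

end
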